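(* If $R$ is an affine ternary relation and $\sigma$ is a permutation of $\mathcal M$ preserving $R$, then $\sigma\in AGL(\mathcal M)$.
   Context: $\mathcal M$ denotes the $\mathbb Q$-vector space $\mathbb Q^{<\omega}$ of all sequences of rationals with only finitely many nonzero terms, with zero vector $\vec 0$. A relation is definable if it is first-order definable without parameters in $\langle\mathcal M;+\rangle$. A permutation $\sigma$ preserves a ternary relation $R$ if $R(a,b,c)\iff R(\sigma a,\sigma b,\sigma c)$ for all $a,b,c$. $AGL(\mathcal M)$ is the group of maps $x\mapsto A x+v$ with $A$ an invertible $\mathbb Q$-linear map of $\mathcal M$ and $v\in\mathcal M$. A ternary relation $R(x,y,z)$ has table $T$, where $T\subset\mathbb Q^2$ is finite, if for all linearly independent $x,y$ and all $z$: $R(x,y,z)\iff z=px+qy$ for some $(p,q)\in T$. A definable ternary relation $R$ is affine if it has a nonempty table $T$ such that every $(p,q)\in T$ satisfies $p\ne0$, $q\ne0$, $p+q=1$, and moreover for all $x,y,z\in\mathcal M$: if $x\ne y$ and $R(x,y,z)$ then $z\in\{x+t(y-x):t\in\mathbb Q\}$, and if $R(x,x,z)$ then $z=x$. *)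

theory Defs
  imports Complex_Main
begin

definition Mset :: "(nat \<Rightarrow> rat) set" where
  "Mset = {f. finite {i. f i \<noteq> 0}}"

definition vzero :: "nat \<Rightarrow> rat" where "vzero = (\<lambda>_. 0)"
definition vadd :: "(nat \<Rightarrow> rat) \<Rightarrow> (nat \<Rightarrow> rat) \<Rightarrow> (nat \<Rightarrow> rat)" where
  "vadd x y = (\<lambda>i. x i + y i)"
definition vsub :: "(nat \<Rightarrow> rat) \<Rightarrow> (nat \<Rightarrow> rat) \<Rightarrow> (nat \<Rightarrow> rat)" where
  "vsub x y = (\<lambda>i. x i - y i)"
definition smul :: "rat \<Rightarrow> (nat \<Rightarrow> rat) \<Rightarrow> (nat \<Rightarrow> rat)" where
  "smul p x = (\<lambda>i. p * x i)"

definition lin_indep2 :: "(nat \<Rightarrow> rat) \<Rightarrow> (nat \<Rightarrow> rat) \<Rightarrow> bool" where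
  "lin_indep2 x y \<longleftrightarrow> (\<forall>p q. vadd (smul p x) (smul q y) = vzero \<longrightarrow> p = 0 \<and> q = 0)"

datatype tm = V nat | Add tm tm
datatype fm = Eq tm tm | Neg fm | Conj fm fm | Ex nat fm

primrec evt :: "(nat \<Rightarrow> nat \<Rightarrow> rat) \<Rightarrow> tm \<Rightarrow> nat \<Rightarrow> rat" where
  "evt e (V n) = e n"
| "evt e (Add s t) = vadd (evt e s) (evt e t)"

primrec sat :: "(nat \<Rightarrow> nat \<Rightarrow> rat) \<Rightarrow> fm \<Rightarrow> bool" where
  "sat e (Eq s t) = (evt e s = evt e t)"
| "sat e (Neg \<phi>) = (\<not> sat e \<phi>)"
| "sat e (Conj \<phi> \<psi>) = (sat e \<phi> \<and> sat e \<psi>)"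
| "sat e (Ex n \<phi>) = (\<exists>a\<in>Mset. sat (e(n := a)) \<phi>)"

definition definable3 :: "((nat \<Rightarrow> rat) \<Rightarrow> (nat \<Rightarrow> rat) \<Rightarrow> (nat \<Rightarrow> rat) \<Rightarrow> bool) \<Rightarrow> bool" where
  "definable3 R \<longleftrightarrow> (\<exists>\<phi>. \<forall>e. (\<forall>n. e n \<in> Mset) \<longrightarrow> (R (e 0) (e 1) (e 2) \<longleftrightarrow> sat e \<phi>))"

definition has_table :: "((nat \<Rightarrow> rat) \<Rightarrow> (nat \<Rightarrow> rat) \<Rightarrow> (nat \<Rightarrow> rat) \<Rightarrow> bool) \<Rightarrow> (rat \<times> rat) set \<Rightarrow> bool" where
  "has_table R T \<longleftrightarrow> finite T \<and>
     (\<forall>x\<in>Mset. \<forall>y\<in>Mset. lin_indep2 x y \<longrightarrow>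
        (\<forall>z\<in>Mset. R x y z \<longleftrightarrow> (\<exists>(p,q)\<in>T. z = vadd (smul p x) (smul q y))))"

definition affine_rel :: "((nat \<Rightarrow> rat) \<Rightarrow> (nat \<Rightarrow> rat) \<Rightarrow> (nat \<Rightarrow> rat) \<Rightarrow> bool) \<Rightarrow> bool" where
  "affine_rel R \<longleftrightarrow> definable3 R \<and>
     (\<exists>T. T \<noteq> {} \<and> has_table R T \<and> (\<forall>(p,q)\<in>T. p \<noteq> 0 \<and> q \<noteq> 0 \<and> p + q = 1)) \<and>
     (\<forall>x\<in>Mset. \<forall>y\<in>Mset. \<forall>z\<in>Mset. x \<noteq> y \<and> R x y z \<longrightarrow>
        (\<exists>t::rat. z = vadd x (smul t (vsub y x)))) \<and>
     (\<forall>x\<in>Mset. \<forall>z\<in>Mset. R x x z \<longrightarrow> z = x)"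

definition preserves3 :: "((nat \<Rightarrow> rat) \<Rightarrow> (nat \<Rightarrow> rat)) \<Rightarrow> ((nat \<Rightarrow> rat) \<Rightarrow> (nat \<Rightarrow> rat) \<Rightarrow> (nat \<Rightarrow> rat) \<Rightarrow> bool) \<Rightarrow> bool" where
  "preserves3 \<sigma> R \<longleftrightarrow> (\<forall>a\<in>Mset. \<forall>b\<in>Mset. \<forall>c\<in>Mset. R a b c \<longleftrightarrow> R (\<sigma> a) (\<sigma> b) (\<sigma> c))"

definition linear_on_M :: "((nat \<Rightarrow> rat) \<Rightarrow> (nat \<Rightarrow> rat)) \<Rightarrow> bool" where
  "linear_on_M A \<longleftrightarrow> (\<forall>x\<in>Mset. \<forall>y\<in>Mset. A (vadd x y) = vadd (A x) (A y)) \<and>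
                       (\<forall>p. \<forall>x\<in>Mset. A (smul p x) = smul p (A x))"

definition in_AGL :: "((nat \<Rightarrow> rat) \<Rightarrow> (nat \<Rightarrow> rat)) \<Rightarrow> bool" where
  "in_AGL \<sigma> \<longleftrightarrow> (\<exists>A v. linear_on_M A \<and> bij_betw A Mset Mset \<and> v \<in> Mset \<and>
                      (\<forall>x\<in>Mset. \<sigma> x = vadd (A x) v))"

end

(*
  The ratio q of any pair in the table of R satisfies R x y (x + q (y - x)) for independent x, y.
  Along a line, the ratios by which \<sigma> carries collinear points to collinear points contain
  q, 1/q and 1/(1 - q) and are closed under r \<mapsto> 1 - r and under products, hence contain -1 and
  all integers; refining the step shows that \<sigma> maps every line through two independent points into
  a line, and a plane argument extends this to lines through 0. Applying the same to \<sigma>\<inverse> shows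
  that the preimage of a line is a line.

  If x, y are independent and their line avoids \<sigma>\<inverse>(0), then \<sigma> x and \<sigma> y are independent:
  otherwise the image line passes through 0, and a chase of parallel lines in a plane spanned by
  images of integer combinations of x and y yields a contradiction. Hence \<sigma> maps parallelograms
  in general position to parallelograms, so \<sigma>(x - y + z) = \<sigma> x - \<sigma> y + \<sigma> z for generic x, y, z;
  unit squares in two fresh coordinates reduce the general case to this one. Therefore
  v \<mapsto> \<sigma>(e + v) - \<sigma>(e), for a unit vector e in a fresh coordinate, is additive, hence \<rat>-linear,
  and \<sigma> is this map plus a constant.
*)

theory Submission
  imports Defs "HOL-Library.Function_Algebras"
begin

lemma vadd_eq_plus [simp]: "vadd x y = x + y"
  by (simp add: vadd_def fun_eq_iff)

lemma vsub_eq_minus [simp]: "vsub x y = x - y"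
  by (simp add: vsub_def fun_eq_iff)

lemma vzero_eq_zero [simp]: "vzero = 0"
  by (simp add: vzero_def fun_eq_iff)

lemma smul_apply [simp]: "smul p x i = p * x i"
  by (simp add: smul_def)

lemma smul_one [simp]: "smul 1 x = x"
  by (simp add: fun_eq_iff)

lemma smul_zero_left [simp]: "smul 0 x = 0"
  by (simp add: fun_eq_iff)

lemma smul_eq_zero_iff [simp]: "smul p x = 0 \<longleftrightarrow> p = 0 \<or> x = 0"
  by (auto simp: fun_eq_iff)

lemma Mset_iff: "x \<in> Mset \<longleftrightarrow> finite {i. x i \<noteq> 0}"
  by (simp add: Mset_def)

lemma Mset_zero [simp, intro]: "0 \<in> Mset"
  by (simp add: Mset_iff)

lemma Mset_add [intro]: "x \<in> Mset \<Longrightarrow> y \<in> Mset \<Longrightarrow> x + y \<in> Mset"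
  unfolding Mset_iff by (rule finite_subset[of _ "{i. x i \<noteq> 0} \<union> {i. y i \<noteq> 0}"]) auto

lemma Mset_diff [intro]: "x \<in> Mset \<Longrightarrow> y \<in> Mset \<Longrightarrow> x - y \<in> Mset"
  unfolding Mset_iff by (rule finite_subset[of _ "{i. x i \<noteq> 0} \<union> {i. y i \<noteq> 0}"]) auto

lemma Mset_smul [intro]: "x \<in> Mset \<Longrightarrow> smul p x \<in> Mset"
  unfolding Mset_iff by (rule finite_subset[of _ "{i. x i \<noteq> 0}"]) auto

lemma Mset_common_zero_coord:
  assumes "finite A" "A \<subseteq> Mset" "finite F"
  shows "\<exists>k. k \<notin> F \<and> (\<forall>v\<in>A. v k = 0)"
proof -
  have "finite (F \<union> (\<Union>v\<in>A. {i. v i \<noteq> 0}))"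
    using assms by (auto simp: Mset_iff)
  then obtain k where "k \<notin> F \<union> (\<Union>v\<in>A. {i. v i \<noteq> 0})"
    using ex_new_if_finite[OF infinite_UNIV_nat] by blast
  then show ?thesis by blast
qed

definition unit_vec :: "nat \<Rightarrow> nat \<Rightarrow> rat" where
  "unit_vec k = (\<lambda>i. if i = k then 1 else 0)"

lemma unit_vec_Mset [simp, intro]: "unit_vec k \<in> Mset"
  unfolding Mset_iff unit_vec_def by (rule finite_subset[of _ "{k}"]) auto

lemma unit_vec_same [simp]: "unit_vec k k = 1"
  by (simp add: unit_vec_def)

lemma unit_vec_other [simp]: "i \<noteq> k \<Longrightarrow> unit_vec k i = 0"
  by (simp add: unit_vec_def)

section \<open>Affine lines\<close>

definition line :: "(nat \<Rightarrow> rat) \<Rightarrow> (nat \<Rightarrow> rat) \<Rightarrow> (nat \<Rightarrow> rat) set" where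
  "line a b = {c. \<exists>t. c = a + smul t (b - a)}"

lemma line_Mset: "a \<in> Mset \<Longrightarrow> b \<in> Mset \<Longrightarrow> c \<in> line a b \<Longrightarrow> c \<in> Mset"
  unfolding line_def by auto

lemma left_in_line [simp]: "a \<in> line a b"
  unfolding line_def by (auto intro!: exI[of _ 0])

lemma right_in_line [simp]: "b \<in> line a b"
  unfolding line_def by (auto intro!: exI[of _ 1])

lemma line_eq:
  assumes "c \<in> line a b" "d \<in> line a b" "c \<noteq> d"
  shows "line c d = line a b"
proof -
  obtain s where c: "c = a + smul s (b - a)" using assms(1) by (auto simp: line_def)
  obtain t where d: "d = a + smul t (b - a)" using assms(2) by (auto simp: line_def)
  have "t \<noteq> s" using assms(3) c d by auto
  have "c + smul u (d - c) = a + smul (s + u * (t - s)) (b - a)" for u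
    unfolding c d by (simp add: fun_eq_iff algebra_simps)
  moreover have "a + smul u (b - a) = c + smul ((u - s) / (t - s)) (d - c)" for u
    unfolding c d using \<open>t \<noteq> s\<close> by (simp add: fun_eq_iff field_simps)
  ultimately show ?thesis unfolding line_def by blast
qed

lemma line_commute: "line a b = line b a"
  using line_eq[of b a b a] by (cases "a = b") auto

lemma line_swap:
  assumes "b \<in> line a c" "b \<noteq> a"
  shows "c \<in> line a b"
  using line_eq[of a a c b] assms by auto

lemma notin_line_same_coord:
  assumes "X c = P c" "Q c \<noteq> P c" "X \<noteq> P"
  shows "X \<notin> line P Q"
proof
  assume "X \<in> line P Q"
  then obtain t where t: "X = P + smul t (Q - P)" by (auto simp: line_def)
  then have "t * (Q c - P c) = 0" using assms(1) by (simp add: fun_eq_iff)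
  then show False using t assms(2,3) by simp
qed

lemma notin_line_const_coord:
  assumes "X c \<noteq> P c" "P c = Q c"
  shows "X \<notin> line P Q"
  using assms by (auto simp: line_def)

lemma lin_indep2D: "lin_indep2 x y \<Longrightarrow> smul p x + smul q y = 0 \<Longrightarrow> p = 0 \<and> q = 0"
  unfolding lin_indep2_def by simp

lemma lin_indep2I: "(\<And>p q. smul p x + smul q y = 0 \<Longrightarrow> p = 0 \<and> q = 0) \<Longrightarrow> lin_indep2 x y"
  unfolding lin_indep2_def by simp

lemma lin_indep2_commute: "lin_indep2 x y \<Longrightarrow> lin_indep2 y x"
  unfolding lin_indep2_def by (metis add.commute vadd_eq_plus vzero_eq_zero)

lemma lin_indep2_nonzero:
  assumes "lin_indep2 x y"
  shows "x \<noteq> 0" "y \<noteq> 0"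
  using lin_indep2D[OF assms, of 1 0] lin_indep2D[OF assms, of 0 1] by auto

lemma lin_indep2_neq: "lin_indep2 x y \<Longrightarrow> x \<noteq> y"
  using lin_indep2D[of x y 1 "-1"] by (auto simp: fun_eq_iff)

lemma lin_indep2_coeffs_eq:
  assumes "lin_indep2 x y" "smul a x + smul b y = smul a' x + smul b' y"
  shows "a = a' \<and> b = b'"
proof -
  have "smul (a - a') x + smul (b - b') y = 0"
    using fun_cong[OF assms(2)] by (simp add: fun_eq_iff algebra_simps)
  then show ?thesis using lin_indep2D[OF assms(1)] by fastforce
qed

lemma lin_indep2_by_coord:
  assumes "P c = 0" "Q c \<noteq> 0" "P \<noteq> 0"
  shows "lin_indep2 P Q"
proof (rule lin_indep2I)
  fix p q assume h: "smul p P + smul q Q = 0"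
  have "p * P c + q * Q c = 0" using fun_cong[OF h, of c] by simp
  then have "q = 0" using assms(1,2) by simp
  then show "p = 0 \<and> q = 0" using h assms(3) by simp
qed

lemma lin_indep2_combination:
  assumes "lin_indep2 x y" "a1 * b2 - a2 * b1 \<noteq> 0"
  shows "lin_indep2 (smul a1 x + smul a2 y) (smul b1 x + smul b2 y)"
proof (rule lin_indep2I)
  fix p q assume "smul p (smul a1 x + smul a2 y) + smul q (smul b1 x + smul b2 y) = 0"
  then have "smul (p * a1 + q * b1) x + smul (p * a2 + q * b2) y = 0"
    by (simp add: fun_eq_iff algebra_simps)
  then have "p * a1 + q * b1 = 0" "p * a2 + q * b2 = 0"
    using lin_indep2D[OF assms(1)] by auto
  moreover have "p * (a1 * b2 - a2 * b1) = b2 * (p * a1 + q * b1) - b1 * (p * a2 + q * b2)"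
    and "q * (a1 * b2 - a2 * b1) = a1 * (p * a2 + q * b2) - a2 * (p * a1 + q * b1)"
    by (simp_all add: algebra_simps)
  ultimately have "p * (a1 * b2 - a2 * b1) = 0" "q * (a1 * b2 - a2 * b1) = 0"
    by simp_all
  then show "p = 0 \<and> q = 0" using assms(2) by simp
qed

lemma line_point_eq_iff:
  assumes "x \<noteq> y"
  shows "x + smul a (y - x) = x + smul b (y - x) \<longleftrightarrow> a = b"
proof -
  have "(x + smul a (y - x)) - (x + smul b (y - x)) = smul (a - b) (y - x)"
    by (simp add: fun_eq_iff algebra_simps)
  then show ?thesis using assms by (metis diff_eq_diff_eq diff_self right_minus_eq smul_eq_zero_iff)
qed

lemma line_point_combination:
  "(x + smul a (y - x)) + smul r ((x + smul b (y - x)) - (x + smul a (y - x))) =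
     x + smul (a + r * (b - a)) (y - x)"
  by (simp add: fun_eq_iff algebra_simps)

lemma lin_indep2_line_points:
  assumes "lin_indep2 x y" "a \<noteq> b"
  shows "lin_indep2 (x + smul a (y - x)) (x + smul b (y - x))"
proof -
  have "x + smul t (y - x) = smul (1 - t) x + smul t y" for t by (simp add: fun_eq_iff algebra_simps)
  moreover have "(1 - a) * b - a * (1 - b) \<noteq> 0" using assms(2) by (simp add: algebra_simps)
  ultimately show ?thesis using lin_indep2_combination[OF assms(1)] by simp
qed

lemma zero_notin_line_if_lin_indep2: "lin_indep2 x y \<Longrightarrow> 0 \<notin> line x y"
proof
  assume indep: "lin_indep2 x y" and "0 \<in> line x y"
  then obtain t where "x + smul t (y - x) = 0" unfolding line_def by auto
  then have "smul (1 - t) x + smul t y = 0" by (simp add: fun_eq_iff algebra_simps)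
  then show False using lin_indep2D[OF indep] by fastforce
qed

lemma not_lin_indep2_multiple:
  assumes "w \<noteq> 0" "e \<noteq> 0" "\<not> lin_indep2 w e"
  shows "\<exists>g. g \<noteq> 0 \<and> w = smul g e"
proof -
  obtain p q where h: "smul p w + smul q e = 0" and pq: "p \<noteq> 0 \<or> q \<noteq> 0"
    using assms(3) unfolding lin_indep2_def by auto
  then have "p \<noteq> 0" using assms(2) by auto
  moreover have "p * w i + q * e i = 0" for i using fun_cong[OF h, of i] by simp
  ultimately have "w = smul (- q / p) e"
    by (simp add: fun_eq_iff field_simps eq_neg_iff_add_eq_0)
  then show ?thesis using assms(1) by (intro exI[of _ "- q / p"]) auto
qed

lemma zero_in_line_if_not_lin_indep2:
  assumes "A \<noteq> 0" "B \<noteq> 0" "A \<noteq> B" "\<not> lin_indep2 A B"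
  shows "0 \<in> line A B"
proof -
  obtain g where g: "g \<noteq> 0" "A = smul g B" using not_lin_indep2_multiple assms by blast
  then have "g \<noteq> 1" using assms(3) by auto
  then have "A + smul (g / (g - 1)) (B - A) = 0"
    unfolding g(2) by (simp add: fun_eq_iff field_simps)
  then show ?thesis unfolding line_def by (metis (mono_tags, lifting) mem_Collect_eq)
qed

definition comb :: "(nat \<Rightarrow> rat) \<Rightarrow> (nat \<Rightarrow> rat) \<Rightarrow> rat \<Rightarrow> rat \<Rightarrow> (nat \<Rightarrow> rat)" where
  "comb x y a b = smul a x + smul b y"

lemma comb_Mset [simp, intro]: "x \<in> Mset \<Longrightarrow> y \<in> Mset \<Longrightarrow> comb x y a b \<in> Mset"
  unfolding comb_def by blast

lemma lin_indep2_comb: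
  "lin_indep2 x y \<Longrightarrow> a1 * b2 - a2 * b1 \<noteq> 0 \<Longrightarrow> lin_indep2 (comb x y a1 a2) (comb x y b1 b2)"
  unfolding comb_def by (rule lin_indep2_combination)

lemma comb_unit: "comb x y 1 0 = x" "comb x y 0 1 = y" "comb x y 0 0 = 0"
  by (simp_all add: comb_def fun_eq_iff)

lemma comb_eq_iff: "lin_indep2 x y \<Longrightarrow> comb x y a b = comb x y a' b' \<longleftrightarrow> a = a' \<and> b = b'"
  unfolding comb_def using lin_indep2_coeffs_eq by blast

lemma comb_line_param:
  "comb x y a1 b1 + smul t (comb x y a2 b2 - comb x y a1 b1) =
     comb x y (a1 + t * (a2 - a1)) (b1 + t * (b2 - b1))"
  by (simp add: comb_def fun_eq_iff algebra_simps)

lemma in_line_comb: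
  assumes "w \<in> line (comb x y a1 b1) (comb x y a2 b2)"
  obtains t where "w = comb x y (a1 + t * (a2 - a1)) (b1 + t * (b2 - b1))"
  using assms comb_line_param unfolding line_def by auto

lemma comb_in_line_iff:
  assumes "lin_indep2 x y"
  shows "comb x y a b \<in> line (comb x y a1 b1) (comb x y a2 b2) \<longleftrightarrow>
           (\<exists>t. a = a1 + t * (a2 - a1) \<and> b = b1 + t * (b2 - b1))"
  unfolding line_def by (auto simp: comb_line_param comb_eq_iff[OF assms])

lemma comb_in_line_iff_sum:
  assumes "lin_indep2 x y"
  shows "comb x y a b \<in> line x y \<longleftrightarrow> a + b = 1"
  using comb_in_line_iff[OF assms, of a b 1 0 0 1] unfolding comb_unit by (auto intro: exI[of _ b])

lemma comb_lines_inter_subset_zero: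
  assumes indep: "lin_indep2 x y"
    and meet: "\<And>s t. a1 + s * (a2 - a1) = a3 + t * (a4 - a3) \<Longrightarrow> b1 + s * (b2 - b1) = b3 + t * (b4 - b3) \<Longrightarrow>
                 a1 + s * (a2 - a1) = 0 \<and> b1 + s * (b2 - b1) = 0"
  shows "line (comb x y a1 b1) (comb x y a2 b2) \<inter> line (comb x y a3 b3) (comb x y a4 b4) \<subseteq> {0}"
proof
  fix w assume w: "w \<in> line (comb x y a1 b1) (comb x y a2 b2) \<inter> line (comb x y a3 b3) (comb x y a4 b4)"
  obtain s where s: "w = comb x y (a1 + s * (a2 - a1)) (b1 + s * (b2 - b1))"
    by (rule in_line_comb[OF IntD1[OF w]])
  obtain t where t: "w = comb x y (a3 + t * (a4 - a3)) (b3 + t * (b4 - b3))"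
    by (rule in_line_comb[OF IntD2[OF w]])
  have "a1 + s * (a2 - a1) = a3 + t * (a4 - a3)" "b1 + s * (b2 - b1) = b3 + t * (b4 - b3)"
    using s t comb_eq_iff[OF indep] by simp_all
  then have "a1 + s * (a2 - a1) = 0" "b1 + s * (b2 - b1) = 0" using meet by blast+
  then show "w \<in> {0}" using s comb_unit(3) by simp
qed

section \<open>Affine planes\<close>

definition plane :: "(nat \<Rightarrow> rat) \<Rightarrow> (nat \<Rightarrow> rat) \<Rightarrow> (nat \<Rightarrow> rat) \<Rightarrow> (nat \<Rightarrow> rat) set" where
  "plane A B D = {X. \<exists>s t. X = A + smul s (B - A) + smul t (D - A)}"

lemma in_plane_swap: "X \<in> plane B A D \<Longrightarrow> X \<in> plane A B D"
proof -
  assume "X \<in> plane B A D"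
  then obtain s t where "X = B + smul s (A - B) + smul t (D - B)" by (auto simp: plane_def)
  then have "X = A + smul (1 - s - t) (B - A) + smul t (D - A)"
    by (simp add: fun_eq_iff algebra_simps)
  then show ?thesis by (auto simp: plane_def)
qed

lemma line_subset_plane: "line A B \<subseteq> plane A B D"
proof
  fix X assume "X \<in> line A B"
  then obtain s where "X = A + smul s (B - A)" by (auto simp: line_def)
  then have "X = A + smul s (B - A) + smul 0 (D - A)" by simp
  then show "X \<in> plane A B D" unfolding plane_def by blast
qed

lemma line_subset_plane': "line A D \<subseteq> plane A B D"
proof
  fix X assume "X \<in> line A D"
  then obtain t where "X = A + smul t (D - A)" by (auto simp: line_def)
  then have "X = A + smul 0 (B - A) + smul t (D - A)" by simp
  then show "X \<in> plane A B D" unfolding plane_def by blast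
qed

lemma points_in_plane [simp]: "A \<in> plane A B D" "B \<in> plane A B D" "D \<in> plane A B D"
  using line_subset_plane[of A B D] line_subset_plane'[of A D B] by auto

lemma line_subset_plane_if_in:
  assumes "P \<in> plane A B D" "Q \<in> plane A B D"
  shows "line P Q \<subseteq> plane A B D"
proof
  fix X assume "X \<in> line P Q"
  then obtain r where X: "X = P + smul r (Q - P)" by (auto simp: line_def)
  obtain s t where P: "P = A + smul s (B - A) + smul t (D - A)"
    using assms(1) by (auto simp: plane_def)
  obtain s' t' where Q: "Q = A + smul s' (B - A) + smul t' (D - A)"
    using assms(2) by (auto simp: plane_def)
  have "X = A + smul (s + r * (s' - s)) (B - A) + smul (t + r * (t' - t)) (D - A)"
    unfolding X P Q by (simp add: fun_eq_iff algebra_simps)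
  then show "X \<in> plane A B D" unfolding plane_def by blast
qed

lemma plane_inter_in_line:
  assumes "X \<in> plane A B D" "X \<in> plane A B D'" "D' \<notin> plane A B D"
  shows "X \<in> line A B"
proof -
  obtain s t where X: "X = A + smul s (B - A) + smul t (D - A)"
    using assms(1) by (auto simp: plane_def)
  obtain s' t' where X': "X = A + smul s' (B - A) + smul t' (D' - A)"
    using assms(2) by (auto simp: plane_def)
  have "t' = 0"
  proof (rule ccontr)
    assume "t' \<noteq> 0"
    have E: "A i + s * (B i - A i) + t * (D i - A i) = A i + s' * (B i - A i) + t' * (D' i - A i)" for i
      using fun_cong[OF trans[OF X[symmetric] X'], of i] by simp
    have "D' i = A i + ((s - s') / t') * (B i - A i) + (t / t') * (D i - A i)" for i
      using E[of i] \<open>t' \<noteq> 0\<close> by (simp add: field_simps) algebra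
    then have "D' = A + smul ((s - s') / t') (B - A) + smul (t / t') (D - A)"
      by (simp add: fun_eq_iff)
    then show False using assms(3) by (auto simp: plane_def)
  qed
  then show ?thesis using X' by (auto simp: line_def)
qed

lemma ex_unit_vec_notin_plane:
  assumes "A \<in> Mset" "B \<in> Mset" "D \<in> Mset" "c \<in> Mset"
  shows "\<exists>k. unit_vec k \<notin> plane A B D \<and> unit_vec k \<noteq> c"
proof -
  obtain k where k: "\<forall>v\<in>{A, B, D, c}. v k = 0"
    using Mset_common_zero_coord[of "{A, B, D, c}" "{}"] assms by auto
  have "X k = 0" if "X \<in> plane A B D" for X
    using that k by (auto simp: plane_def)
  then show ?thesis using k by (metis insertCI unit_vec_same zero_neq_one)
qed

lemma proportional_if_det_zero:
  fixes a1 a2 c1 c2 :: "'a::field"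
  assumes "a1 * c2 - a2 * c1 = 0" "a1 \<noteq> 0 \<or> a2 \<noteq> 0"
  shows "\<exists>k. c1 = k * a1 \<and> c2 = k * a2"
proof (cases "a1 = 0")
  case True
  then show ?thesis using assms by (intro exI[of _ "c2 / a2"]) (auto simp: field_simps)
next
  case False
  then show ?thesis using assms by (intro exI[of _ "c1 / a1"]) (auto simp: field_simps)
qed

lemma disjoint_lines_parallel:
  assumes in_plane: "A \<in> plane P Q W" "B \<in> plane P Q W" "C \<in> plane P Q W" "D \<in> plane P Q W"
    and "A \<noteq> B" and disjoint: "line A B \<inter> line C D = {}"
  shows "\<exists>k. D - C = smul k (B - A)"
proof -
  define u v where "u = Q - P" and "v = W - P"
  have "\<exists>a b. X = P + smul a u + smul b v" if "X \<in> plane P Q W" for X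
    using that unfolding plane_def u_def v_def by blast
  then obtain a1 a2 b1 b2 c1 c2 d1 d2 where
    A: "A = P + smul a1 u + smul a2 v" and B: "B = P + smul b1 u + smul b2 v" and
    C: "C = P + smul c1 u + smul c2 v" and D: "D = P + smul d1 u + smul d2 v"
    using in_plane by meson
  define \<alpha>1 \<alpha>2 \<gamma>1 \<gamma>2
    where "\<alpha>1 = b1 - a1" and "\<alpha>2 = b2 - a2" and "\<gamma>1 = d1 - c1" and "\<gamma>2 = d2 - c2"
  have BA: "B - A = smul \<alpha>1 u + smul \<alpha>2 v" and DC: "D - C = smul \<gamma>1 u + smul \<gamma>2 v"
    unfolding A B C D \<alpha>1_def \<alpha>2_def \<gamma>1_def \<gamma>2_def by (simp_all add: fun_eq_iff algebra_simps)
  have "\<alpha>1 * \<gamma>2 - \<alpha>2 * \<gamma>1 = 0"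
  proof (rule ccontr)
    assume \<Delta>: "\<alpha>1 * \<gamma>2 - \<alpha>2 * \<gamma>1 \<noteq> 0"
    define e1 e2 where "e1 = c1 - a1" and "e2 = c2 - a2"
    define s t where "s = (\<gamma>2 * e1 - \<gamma>1 * e2) / (\<alpha>1 * \<gamma>2 - \<alpha>2 * \<gamma>1)"
      and "t = (\<alpha>2 * e1 - \<alpha>1 * e2) / (\<alpha>1 * \<gamma>2 - \<alpha>2 * \<gamma>1)"
    have "a1 + s * \<alpha>1 = c1 + t * \<gamma>1" "a2 + s * \<alpha>2 = c2 + t * \<gamma>2"
      unfolding s_def t_def e1_def e2_def using \<Delta> by (simp_all add: field_simps)
    moreover have "A + smul s (B - A) = P + smul (a1 + s * \<alpha>1) u + smul (a2 + s * \<alpha>2) v"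
      and "C + smul t (D - C) = P + smul (c1 + t * \<gamma>1) u + smul (c2 + t * \<gamma>2) v"
      unfolding BA DC unfolding A C by (simp_all add: fun_eq_iff algebra_simps)
    ultimately have meet: "A + smul s (B - A) = C + smul t (D - C)" by simp
    have "A + smul s (B - A) \<in> line A B" unfolding line_def by blast
    moreover have "A + smul s (B - A) \<in> line C D" unfolding line_def meet by blast
    ultimately show False using disjoint by blast
  qed
  moreover have "\<alpha>1 \<noteq> 0 \<or> \<alpha>2 \<noteq> 0" using \<open>A \<noteq> B\<close> BA by auto
  ultimately obtain k where "\<gamma>1 = k * \<alpha>1" "\<gamma>2 = k * \<alpha>2"
    using proportional_if_det_zero by blast
  then have "D - C = smul k (B - A)" unfolding BA DC by (simp add: fun_eq_iff algebra_simps)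
  then show ?thesis ..
qed

lemma parallelogram_vertex:
  assumes AB_CD: "line A B \<inter> line C D = {}" and BC_DA: "line B C \<inter> line D A = {}"
    and "P \<in> line A C" "P \<in> line B D"
  shows "D = A - B + C"
proof -
  obtain s where s: "P = A + smul s (C - A)" using assms(3) by (auto simp: line_def)
  obtain t where t: "P = B + smul t (D - B)" using assms(4) by (auto simp: line_def)
  have "t \<noteq> 0"
  proof
    assume "t = 0"
    then have "B \<in> line A C" using t assms(3) by simp
    show False
    proof (cases "B = C")
      case True
      then have "C \<in> line A B \<inter> line C D" by simp
      then show False using AB_CD by simp
    next
      case False
      then have "line B C = line A C" using line_eq[OF \<open>B \<in> line A C\<close>] by simp
      then have "A \<in> line B C \<inter> line D A" by simp
      then show False using BC_DA by simp
    qed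
  qed
  define \<alpha> \<beta> where "\<alpha> = (t - 1) / t" and "\<beta> = s / t"
  have st: "A i + s * (C i - A i) = B i + t * (D i - B i)" for i
    using fun_cong[OF trans[OF s[symmetric] t], of i] by simp
  have D: "D i = A i + \<alpha> * (B i - A i) + \<beta> * (C i - A i)" for i
    using st[of i] \<open>t \<noteq> 0\<close> unfolding \<alpha>_def \<beta>_def by (simp add: field_simps) algebra
  have "\<beta> = 1"
  proof (rule ccontr)
    assume "\<beta> \<noteq> 1"
    define b where "b = 1 / (1 - \<beta>)"
    have meet: "C + smul b (D - C) = A + smul (b * \<alpha>) (B - A)"
      using \<open>\<beta> \<noteq> 1\<close> unfolding b_def by (simp add: fun_eq_iff D field_simps)
    have "C + smul b (D - C) \<in> line C D" unfolding line_def by blast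
    moreover have "C + smul b (D - C) \<in> line A B" unfolding line_def meet by blast
    ultimately show False using AB_CD by blast
  qed
  have "\<alpha> = -1"
  proof (rule ccontr)
    assume "\<alpha> \<noteq> -1"
    define b where "b = 1 / (\<alpha> + 1)"
    have meet: "D + smul (1 - b) (A - D) = B + smul b (C - B)"
      using \<open>\<alpha> \<noteq> -1\<close> \<open>\<beta> = 1\<close> unfolding b_def
      by (simp add: fun_eq_iff D field_simps)
    have "D + smul (1 - b) (A - D) \<in> line D A" unfolding line_def by blast
    moreover have "D + smul (1 - b) (A - D) \<in> line B C" unfolding line_def meet by blast
    ultimately show False using BC_DA by blast
  qed
  then show ?thesis using D \<open>\<beta> = 1\<close> by (simp add: fun_eq_iff algebra_simps)
qed

lemma parallelogram_sides_disjoint: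
  assumes "W = X - Y + Z"
  shows "Z \<notin> line X Y \<Longrightarrow> line X Y \<inter> line Z W = {}"
    and "X \<notin> line Y Z \<Longrightarrow> line Y Z \<inter> line W X = {}"
proof -
  show "line X Y \<inter> line Z W = {}" if "Z \<notin> line X Y"
  proof -
    have "X + smul a (Y - X) \<noteq> Z + smul b (W - Z)" for a b
    proof
      assume "X + smul a (Y - X) = Z + smul b (W - Z)"
      then have "Z = X + smul (a + b) (Y - X)"
        using assms by (simp add: fun_eq_iff algebra_simps)
      then show False using that unfolding line_def by blast
    qed
    then show ?thesis unfolding line_def by blast
  qed
  show "line Y Z \<inter> line W X = {}" if "X \<notin> line Y Z"
  proof -
    have "Y + smul a (Z - Y) \<noteq> W + smul b (X - W)" for a b
    proof
      assume "Y + smul a (Z - Y) = W + smul b (X - W)"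
      then have "X = Y + smul (a + b - 1) (Z - Y)"
        using assms by (simp add: fun_eq_iff algebra_simps)
      then show False using that unfolding line_def by blast
    qed
    then show ?thesis unfolding line_def by blast
  qed
qed

lemma in_line_if_parallel:
  assumes "Y - D = smul k u" "X - D = smul m u" "k \<noteq> 0"
  shows "X \<in> line D Y"
proof -
  have "X i = D i + (m / k) * (Y i - D i)" for i
  proof -
    have "Y i - D i = k * u i" "X i - D i = m * u i"
      using fun_cong[OF assms(1), of i] fun_cong[OF assms(2), of i] by simp_all
    then show ?thesis using assms(3) by (simp add: algebra_simps)
  qed
  then have "X = D + smul (m / k) (Y - D)" by (simp add: fun_eq_iff)
  then show ?thesis unfolding line_def by blast
qed

lemma chord_through_multiple:
  assumes "lin_indep2 d e" "\<gamma> \<noteq> 0" "\<alpha> \<noteq> \<beta>" "\<gamma> \<noteq> 2 * \<alpha> - \<beta>"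
  shows "\<exists>a b. a \<in> line d (smul \<alpha> e) \<and> b \<in> line d (smul \<beta> e) \<and> lin_indep2 a b \<and>
           smul \<gamma> e \<in> line a b"
proof -
  define s where "s = (\<gamma> - \<beta>) / (2 * (\<alpha> - \<beta>))"
  define t where "t = 2 * s - 1"
  have s: "s * (2 * (\<alpha> - \<beta>)) = \<gamma> - \<beta>" using assms(3) unfolding s_def by simp
  then have "s \<noteq> 1" using assms(4) by (auto simp: algebra_simps)
  define a b where "a = smul (1 - s) d + smul (s * \<alpha>) e" and "b = smul (1 - t) d + smul (t * \<beta>) e"
  have "a = d + smul s (smul \<alpha> e - d)" "b = d + smul t (smul \<beta> e - d)"
    unfolding a_def b_def by (simp_all add: fun_eq_iff algebra_simps)
  then have lines: "a \<in> line d (smul \<alpha> e)" "b \<in> line d (smul \<beta> e)" unfolding line_def by blast+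
  have "(1 - s) * (t * \<beta>) - (s * \<alpha>) * (1 - t) = - (1 - s) * \<gamma>"
    using s unfolding t_def by algebra
  then have indep: "lin_indep2 a b"
    unfolding a_def b_def using \<open>s \<noteq> 1\<close> assms(2) by (intro lin_indep2_combination[OF assms(1)]) simp
  have \<gamma>: "\<gamma> = 2 * (s * \<alpha>) - t * \<beta>" using s unfolding t_def by algebra
  have "smul \<gamma> e = a + smul (-1) (b - a)"
    unfolding a_def b_def \<gamma> by (simp add: fun_eq_iff algebra_simps t_def)
  then have "smul \<gamma> e \<in> line a b" unfolding line_def by blast
  with lines indep show ?thesis by blast
qed

lemma in_line_by_parallel_chain:
  assumes "X \<in> plane A B C" "X' \<in> plane A B C" "Y \<in> plane A B C" "Y' \<in> plane A B C"
      "D \<in> plane A B C" "P \<in> plane A B C"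
    and "X \<noteq> X'" "Y \<noteq> Y'" "Y \<noteq> D"
    and "line X X' \<inter> line Y D = {}" "line X X' \<inter> line Y Y' = {}" "line Y Y' \<inter> line P D = {}"
  shows "P \<in> line Y D"
proof -
  obtain k1 where k1: "D - Y = smul k1 (X' - X)"
    using disjoint_lines_parallel[OF assms(1,2,3,5,7,10)] by blast
  obtain k2 where k2: "Y' - Y = smul k2 (X' - X)"
    using disjoint_lines_parallel[OF assms(1,2,3,4,7,11)] by blast
  obtain k3 where k3: "D - P = smul k3 (Y' - Y)"
    using disjoint_lines_parallel[OF assms(3,4,6,5,8,12)] by blast
  have "k1 \<noteq> 0" using k1 assms(9) by auto
  moreover have "Y - D = smul (- k1) (X' - X)"
    using fun_cong[OF k1] by (simp add: fun_eq_iff) (metis minus_diff_eq)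
  moreover have "P - D = smul (- (k3 * k2)) (X' - X)"
    using fun_cong[OF k3[unfolded k2]] by (simp add: fun_eq_iff algebra_simps)
  ultimately have "P \<in> line D Y" using in_line_if_parallel by (metis neg_equal_0_iff_equal)
  then show ?thesis using line_commute by blast
qed

section \<open>Rational ratios and additive maps\<close>

lemma affine_int_combination_closed:
  fixes S :: "rat set" and q :: rat
  assumes q: "q \<noteq> 0" "q \<noteq> 1"
    and closed: "\<And>a b r. a \<in> S \<Longrightarrow> b \<in> S \<Longrightarrow> a \<noteq> b \<Longrightarrow> r \<in> {q, 1 / q, 1 / (1 - q)} \<Longrightarrow>
                   a + r * (b - a) \<in> S"
    and "u \<in> S" "v \<in> S"
  shows "u + of_int k * (v - u) \<in> S"
proof -
  \<comment> \<open>The admissible ratios contain the generators and are closed under r \<mapsto> 1 - r and products.\<close>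
  define G where "G = {r. \<forall>a\<in>S. \<forall>b\<in>S. a + r * (b - a) \<in> S}"
  have gen: "r \<in> G" if "r \<in> {q, 1 / q, 1 / (1 - q)}" for r
    unfolding G_def
  proof (intro CollectI ballI)
    fix a b assume "a \<in> S" "b \<in> S"
    then show "a + r * (b - a) \<in> S" using closed[OF _ _ _ that] by (cases "a = b") auto
  qed
  have one_minus: "1 - r \<in> G" if "r \<in> G" for r
    unfolding G_def
  proof (intro CollectI ballI)
    fix a b assume "a \<in> S" "b \<in> S"
    then have "b + r * (a - b) \<in> S" using that unfolding G_def by blast
    moreover have "b + r * (a - b) = a + (1 - r) * (b - a)" by (simp add: algebra_simps)
    ultimately show "a + (1 - r) * (b - a) \<in> S" by simp
  qed
  have mult: "r * s \<in> G" if "r \<in> G" "s \<in> G" for r s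
    unfolding G_def
  proof (intro CollectI ballI)
    fix a b assume "a \<in> S" "b \<in> S"
    then have "a + r * ((a + s * (b - a)) - a) \<in> S" using that unfolding G_def by blast
    moreover have "a + r * ((a + s * (b - a)) - a) = a + (r * s) * (b - a)" by (simp add: algebra_simps)
    ultimately show "a + (r * s) * (b - a) \<in> S" by (simp add: mult.assoc)
  qed
  have gens: "q \<in> G" "1 / q \<in> G" "1 / (1 - q) \<in> G" using gen by auto
  have "(1 - 1 / (1 - q)) * (1 / q) * (1 - q) \<in> G"
    using mult[OF mult[OF one_minus[OF gens(3)] gens(2)] one_minus[OF gens(1)]] .
  moreover have "(1 - 1 / (1 - q)) * (1 / q) * (1 - q) = -1" using q by (simp add: field_simps)
  ultimately have minus_one: "-1 \<in> G" by simp
  have "of_int k \<in> G"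
  proof (induction k rule: int_induct[where k = 0])
    case base
    then show ?case unfolding G_def by simp
  next
    case (step1 i)
    then show ?case using one_minus[OF mult[OF minus_one step1(2)]] by (simp add: add.commute)
  next
    case (step2 i)
    then show ?case using mult[OF minus_one one_minus[OF step2(2)]] by simp
  qed
  then show ?thesis using assms(4,5) unfolding G_def by blast
qed

lemma additive_on_Mset_int_homogeneous:
  assumes add: "\<And>a b. a \<in> Mset \<Longrightarrow> b \<in> Mset \<Longrightarrow> G (a + b) = G a + G b"
    and w: "w \<in> Mset"
  shows "G (smul (of_int k) w) = smul (of_int k) (G w)"
proof (induction k rule: int_induct[where k = 0])
  case base
  have "G 0 = G 0 + G 0" using add[of 0 0] by simp
  then have "G 0 = 0" by simp
  then show ?case by (simp only: of_int_0 smul_zero_left)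
next
  case (step1 i)
  have "smul (of_int (i + 1)) w = smul (of_int i) w + w" by (simp add: fun_eq_iff algebra_simps)
  then have "G (smul (of_int (i + 1)) w) = G (smul (of_int i) w) + G w" using add w by auto
  also have "\<dots> = smul (of_int (i + 1)) (G w)"
    unfolding step1(2) by (simp add: fun_eq_iff algebra_simps)
  finally show ?case .
next
  case (step2 i)
  have "smul (of_int i) w = smul (of_int (i - 1)) w + w" by (simp add: fun_eq_iff algebra_simps)
  then have "G (smul (of_int i) w) = G (smul (of_int (i - 1)) w) + G w" using add w by auto
  then have "G (smul (of_int (i - 1)) w) = G (smul (of_int i) w) - G w" by simp
  also have "\<dots> = smul (of_int (i - 1)) (G w)"
    unfolding step2(2) by (simp add: fun_eq_iff algebra_simps)
  finally show ?case .
qed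

lemma additive_on_Mset_homogeneous:
  assumes add: "\<And>a b. a \<in> Mset \<Longrightarrow> b \<in> Mset \<Longrightarrow> G (a + b) = G a + G b"
    and v: "v \<in> Mset"
  shows "G (smul p v) = smul p (G v)"
proof -
  have int: "G (smul (of_int k) w) = smul (of_int k) (G w)" if "w \<in> Mset" for k w
    by (rule additive_on_Mset_int_homogeneous[OF add that])
  obtain a b where ab: "quotient_of p = (a, b)" by (cases "quotient_of p")
  have "b > 0" "p = of_int a / of_int b"
    using quotient_of_denom_pos[OF ab] quotient_of_div[OF ab] by simp_all
  then have bp: "of_int b * p = of_int a" by simp
  have "smul (of_int b) (G (smul p v)) = G (smul (of_int b) (smul p v))"
    using int[of "smul p v" b] v by (simp add: Mset_smul)
  also have "smul (of_int b) (smul p v) = smul (of_int a) v"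
    using bp by (simp add: fun_eq_iff mult.assoc[symmetric])
  also have "G (smul (of_int a) v) = smul (of_int a) (G v)" using int[OF v] .
  finally have e: "smul (of_int b) (G (smul p v)) = smul (of_int a) (G v)" .
  have "of_int b * G (smul p v) i = of_int b * (p * G v i)" for i
    using fun_cong[OF e, of i] bp by (simp only: smul_apply mult.assoc[symmetric])
  then show ?thesis using \<open>b > 0\<close> by (simp add: fun_eq_iff)
qed

section \<open>Permutations preserving an affine relation\<close>

locale affine_rel_automorphism =
  fixes R :: "(nat \<Rightarrow> rat) \<Rightarrow> (nat \<Rightarrow> rat) \<Rightarrow> (nat \<Rightarrow> rat) \<Rightarrow> bool"
    and \<sigma> :: "(nat \<Rightarrow> rat) \<Rightarrow> (nat \<Rightarrow> rat)"
  assumes affine: "affine_rel R"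
    and bij: "bij_betw \<sigma> Mset Mset"
    and preserves: "preserves3 \<sigma> R"
begin

lemma \<sigma>_Mset [simp, intro]: "x \<in> Mset \<Longrightarrow> \<sigma> x \<in> Mset"
  using bij by (auto simp: bij_betw_def)

lemma \<sigma>_eq_iff: "x \<in> Mset \<Longrightarrow> y \<in> Mset \<Longrightarrow> \<sigma> x = \<sigma> y \<longleftrightarrow> x = y"
  using bij by (auto simp: bij_betw_def inj_on_def)

lemma \<sigma>_surj: "z \<in> Mset \<Longrightarrow> \<exists>w\<in>Mset. z = \<sigma> w"
  using bij by (auto simp: bij_betw_def)

lemma R_iff: "a \<in> Mset \<Longrightarrow> b \<in> Mset \<Longrightarrow> c \<in> Mset \<Longrightarrow> R (\<sigma> a) (\<sigma> b) (\<sigma> c) \<longleftrightarrow> R a b c"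
  using preserves by (simp add: preserves3_def)

lemma R_in_line: "x \<in> Mset \<Longrightarrow> y \<in> Mset \<Longrightarrow> z \<in> Mset \<Longrightarrow> x \<noteq> y \<Longrightarrow> R x y z \<Longrightarrow> z \<in> line x y"
  using affine unfolding affine_rel_def line_def by auto

lemma ex_table_ratio:
  obtains q where "q \<noteq> 0" "q \<noteq> 1"
    "\<And>x y. x \<in> Mset \<Longrightarrow> y \<in> Mset \<Longrightarrow> lin_indep2 x y \<Longrightarrow> R x y (x + smul q (y - x))"
proof -
  obtain T where T: "T \<noteq> {}" "has_table R T" "\<forall>(p, q)\<in>T. p \<noteq> 0 \<and> q \<noteq> 0 \<and> p + q = 1"
    using affine unfolding affine_rel_def by blast
  obtain p q where pq: "(p, q) \<in> T" using T(1) by auto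
  then have "p \<noteq> 0" "q \<noteq> 0" and p: "p = 1 - q" using T(3) by auto
  moreover have "R x y (x + smul q (y - x))" if "x \<in> Mset" "y \<in> Mset" "lin_indep2 x y" for x y
  proof -
    have "x + smul q (y - x) = smul p x + smul q y"
      unfolding p by (simp add: fun_eq_iff algebra_simps)
    moreover have "x + smul q (y - x) \<in> Mset" using that by blast
    ultimately show ?thesis using T(2) that pq unfolding has_table_def by auto
  qed
  ultimately show ?thesis using that by auto
qed

lemma R_image_collinear:
  assumes "u \<in> Mset" "v \<in> Mset" "w \<in> Mset" "u \<noteq> v" "u \<noteq> w" "v \<noteq> w" "R u v w"
  shows "\<sigma> u \<in> line (\<sigma> v) (\<sigma> w)" "\<sigma> v \<in> line (\<sigma> u) (\<sigma> w)" "\<sigma> w \<in> line (\<sigma> u) (\<sigma> v)"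
proof -
  have ne: "\<sigma> u \<noteq> \<sigma> v" "\<sigma> u \<noteq> \<sigma> w" "\<sigma> v \<noteq> \<sigma> w" using assms \<sigma>_eq_iff by auto
  show w: "\<sigma> w \<in> line (\<sigma> u) (\<sigma> v)" using R_in_line[of "\<sigma> u" "\<sigma> v" "\<sigma> w"] R_iff assms ne by auto
  show "\<sigma> v \<in> line (\<sigma> u) (\<sigma> w)" using line_swap[OF w] ne by auto
  show "\<sigma> u \<in> line (\<sigma> v) (\<sigma> w)" using line_swap[of "\<sigma> w" "\<sigma> v" "\<sigma> u"] w ne line_commute by auto
qed

lemma image_line_ratio_step:
  assumes xy: "x \<in> Mset" "y \<in> Mset" "lin_indep2 x y"
    and q: "q \<noteq> 0" "q \<noteq> 1"
    and table: "\<And>x y. x \<in> Mset \<Longrightarrow> y \<in> Mset \<Longrightarrow> lin_indep2 x y \<Longrightarrow> R x y (x + smul q (y - x))"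
    and "a \<noteq> b" and r: "r \<in> {q, 1 / q, 1 / (1 - q)}"
  shows "\<sigma> (x + smul (a + r * (b - a)) (y - x)) \<in> line (\<sigma> (x + smul a (y - x))) (\<sigma> (x + smul b (y - x)))"
proof -
  let ?P = "\<lambda>t. x + smul t (y - x)"
  have P_Mset: "?P t \<in> Mset" for t using xy by blast
  have P_R: "R (?P s) (?P t) (?P (s + q * (t - s)))" if "s \<noteq> t" for s t
    using table[OF P_Mset P_Mset lin_indep2_line_points[OF xy(3) that]] unfolding line_point_combination .
  define c where "c = a + r * (b - a)"
  have "r \<noteq> 0" "r \<noteq> 1" using r q by auto
  moreover have "c - a = r * (b - a)" "c - b = (r - 1) * (b - a)"
    unfolding c_def by (simp_all add: algebra_simps)
  ultimately have "c \<noteq> a" "c \<noteq> b" using \<open>a \<noteq> b\<close> by auto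
  then have ne: "?P a \<noteq> ?P b" "?P a \<noteq> ?P c" "?P b \<noteq> ?P c"
    using \<open>a \<noteq> b\<close> line_point_eq_iff[OF lin_indep2_neq[OF xy(3)]] by auto
  \<comment> \<open>c forms an R-triple with a and b, in an order depending on r.\<close>
  consider "r = q" | "r = 1 / q" | "r = 1 / (1 - q)" using r by blast
  then have "\<sigma> (?P c) \<in> line (\<sigma> (?P a)) (\<sigma> (?P b))"
  proof cases
    case 1
    then have "R (?P a) (?P b) (?P c)" using P_R[OF \<open>a \<noteq> b\<close>] unfolding c_def by simp
    then show ?thesis using R_image_collinear(3)[OF P_Mset P_Mset P_Mset ne(1,2,3)] by blast
  next
    case 2
    then have "b = a + q * (c - a)" using q unfolding c_def by simp
    then have "R (?P a) (?P c) (?P b)" using P_R[of a c] \<open>c \<noteq> a\<close> by auto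
    then show ?thesis using R_image_collinear(2)[OF P_Mset P_Mset P_Mset ne(2,1) ne(3)[symmetric]] by blast
  next
    case 3
    then have "r * (1 - q) = 1" using q by simp
    then have "b = c + q * (a - c)" unfolding c_def by algebra
    then have "R (?P c) (?P a) (?P b)" using P_R[of c a] \<open>c \<noteq> a\<close> by auto
    then show ?thesis
      using R_image_collinear(1)[OF P_Mset P_Mset P_Mset ne(2)[symmetric] ne(3)[symmetric] ne(1)] by blast
  qed
  then show ?thesis unfolding c_def .
qed

lemma image_line_int_steps:
  assumes xy: "x \<in> Mset" "y \<in> Mset" "lin_indep2 x y" and "u \<noteq> v"
  shows "\<sigma> (x + smul (u + of_int k * (v - u)) (y - x)) \<in>
           line (\<sigma> (x + smul u (y - x))) (\<sigma> (x + smul v (y - x)))"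
proof -
  obtain q where q: "q \<noteq> 0" "q \<noteq> 1"
    and table: "\<And>x y. x \<in> Mset \<Longrightarrow> y \<in> Mset \<Longrightarrow> lin_indep2 x y \<Longrightarrow> R x y (x + smul q (y - x))"
    by (rule ex_table_ratio) blast
  let ?P = "\<lambda>t. x + smul t (y - x)"
  define L where "L = line (\<sigma> (?P u)) (\<sigma> (?P v))"
  define S where "S = {t. \<sigma> (?P t) \<in> L}"
  have line_S: "line (\<sigma> (?P a)) (\<sigma> (?P b)) = L" if "a \<in> S" "b \<in> S" "a \<noteq> b" for a b
  proof -
    have "?P a \<noteq> ?P b" using that(3) line_point_eq_iff[OF lin_indep2_neq[OF xy(3)]] by simp
    moreover have "?P a \<in> Mset" "?P b \<in> Mset" using xy by blast+
    ultimately have "\<sigma> (?P a) \<noteq> \<sigma> (?P b)" using \<sigma>_eq_iff by blast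
    then show ?thesis using line_eq that(1,2) unfolding S_def L_def by blast
  qed
  have "a + r * (b - a) \<in> S" if "a \<in> S" "b \<in> S" "a \<noteq> b" "r \<in> {q, 1 / q, 1 / (1 - q)}" for a b r
    using image_line_ratio_step[OF xy q table that(3,4)] line_S[OF that(1-3)] unfolding S_def by simp
  moreover have "u \<in> S" "v \<in> S" unfolding S_def L_def by simp_all
  ultimately have "u + of_int k * (v - u) \<in> S" by (rule affine_int_combination_closed[OF q])
  then show ?thesis unfolding S_def L_def by simp
qed

lemma image_in_line:
  assumes xy: "x \<in> Mset" "y \<in> Mset" "lin_indep2 x y"
    and uvw: "u \<in> line x y" "v \<in> line x y" "w \<in> line x y" "u \<noteq> v"
  shows "\<sigma> w \<in> line (\<sigma> u) (\<sigma> v)"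
proof -
  obtain a b c where abc: "u = x + smul a (y - x)" "v = x + smul b (y - x)" "w = x + smul c (y - x)"
    using uvw unfolding line_def by auto
  have "a \<noteq> b" using abc uvw(4) by auto
  obtain n m where nm: "quotient_of ((c - a) / (b - a)) = (n, m)"
    by (cases "quotient_of ((c - a) / (b - a))")
  have "m > 0" "(c - a) / (b - a) = of_int n / of_int m"
    using quotient_of_denom_pos[OF nm] quotient_of_div[OF nm] by simp_all
  \<comment> \<open>Refine the step from a to b to 1/m of it, so that a, b, c are all integer steps.\<close>
  define b' where "b' = a + (b - a) / of_int m"
  have "a \<noteq> b'" using \<open>a \<noteq> b\<close> \<open>m > 0\<close> unfolding b'_def by simp
  have steps: "a = a + of_int 0 * (b' - a)" "b = a + of_int m * (b' - a)" "c = a + of_int n * (b' - a)"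
    using \<open>a \<noteq> b\<close> \<open>m > 0\<close> \<open>(c - a) / (b - a) = of_int n / of_int m\<close> unfolding b'_def
    by (simp_all add: field_simps)
  define L where "L = line (\<sigma> (x + smul a (y - x))) (\<sigma> (x + smul b' (y - x)))"
  have "\<sigma> u \<in> L" "\<sigma> v \<in> L" "\<sigma> w \<in> L"
    unfolding L_def abc using image_line_int_steps[OF xy \<open>a \<noteq> b'\<close>] steps by (metis (no_types))+
  moreover have "\<sigma> u \<noteq> \<sigma> v" using uvw \<sigma>_eq_iff line_Mset xy by metis
  ultimately show ?thesis using line_eq[of "\<sigma> u" _ _ "\<sigma> v"] unfolding L_def by blast
qed

lemma image_multiple_in_plane:
  assumes "e \<in> Mset" "d \<in> Mset" "lin_indep2 d e" "\<alpha> \<noteq> 0" "\<beta> \<noteq> 0" "\<gamma> \<noteq> 0" "\<alpha> \<noteq> \<beta>"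
  shows "\<sigma> (smul \<gamma> e) \<in> plane (\<sigma> (smul \<alpha> e)) (\<sigma> (smul \<beta> e)) (\<sigma> d)"
proof -
  have chord: "\<sigma> (smul \<gamma> e) \<in> plane (\<sigma> (smul \<alpha>' e)) (\<sigma> (smul \<beta>' e)) (\<sigma> d)"
    if ne: "\<alpha>' \<noteq> 0" "\<beta>' \<noteq> 0" "\<alpha>' \<noteq> \<beta>'" "\<gamma> \<noteq> 2 * \<alpha>' - \<beta>'" for \<alpha>' \<beta>'
  proof -
    \<comment> \<open>\<gamma> e lies on a chord between the lines through d and \<alpha>' e and through d and \<beta>' e.\<close>
    obtain a b where ab: "a \<in> line d (smul \<alpha>' e)" "b \<in> line d (smul \<beta>' e)" "lin_indep2 a b"
      "smul \<gamma> e \<in> line a b"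
      using chord_through_multiple[OF assms(3,6) ne(3,4)] by blast
    have indep: "lin_indep2 d (smul g e)" if "g \<noteq> 0" for g
    proof -
      have "lin_indep2 (smul 1 d + smul 0 e) (smul 0 d + smul g e)"
        by (rule lin_indep2_combination[OF assms(3)]) (use that in simp)
      then show ?thesis by simp
    qed
    let ?\<Pi> = "plane (\<sigma> (smul \<alpha>' e)) (\<sigma> (smul \<beta>' e)) (\<sigma> d)"
    have "\<sigma> a \<in> line (\<sigma> d) (\<sigma> (smul \<alpha>' e))"
      using image_in_line[OF assms(2) _ indep[OF ne(1)] left_in_line right_in_line ab(1)]
        lin_indep2_neq[OF indep[OF ne(1)]] assms(1) by blast
    moreover have "\<sigma> b \<in> line (\<sigma> d) (\<sigma> (smul \<beta>' e))"
      using image_in_line[OF assms(2) _ indep[OF ne(2)] left_in_line right_in_line ab(2)]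
        lin_indep2_neq[OF indep[OF ne(2)]] assms(1) by blast
    ultimately have "\<sigma> a \<in> ?\<Pi>" "\<sigma> b \<in> ?\<Pi>"
      using line_subset_plane_if_in[OF points_in_plane(3) points_in_plane(1)]
        line_subset_plane_if_in[OF points_in_plane(3) points_in_plane(2)] by blast+
    moreover have "a \<in> Mset" "b \<in> Mset" using ab(1,2) assms(1,2) line_Mset by blast+
    then have "\<sigma> (smul \<gamma> e) \<in> line (\<sigma> a) (\<sigma> b)"
      using image_in_line[OF _ _ ab(3) left_in_line right_in_line ab(4) lin_indep2_neq[OF ab(3)]] by blast
    ultimately show ?thesis using line_subset_plane_if_in by blast
  qed
  show ?thesis
  proof (cases "\<gamma> = 2 * \<alpha> - \<beta>")
    case False
    then show ?thesis using chord assms by blast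
  next
    case True
    then have "\<gamma> \<noteq> 2 * \<beta> - \<alpha>" using assms(7) by auto
    then show ?thesis using chord[of \<beta> \<alpha>] assms in_plane_swap by auto
  qed
qed

lemma image_multiples_collinear:
  assumes "e \<in> Mset" "e \<noteq> 0" "\<alpha> \<noteq> 0" "\<beta> \<noteq> 0" "\<gamma> \<noteq> 0" "\<alpha> \<noteq> \<beta>"
  shows "\<sigma> (smul \<gamma> e) \<in> line (\<sigma> (smul \<alpha> e)) (\<sigma> (smul \<beta> e))"
proof -
  define A B where "A = \<sigma> (smul \<alpha> e)" and "B = \<sigma> (smul \<beta> e)"
  have "A \<in> Mset" "B \<in> Mset" unfolding A_def B_def using assms(1) by blast+
  have in_plane: "\<sigma> (smul g e) \<in> plane A B (\<sigma> d)" if "d \<in> Mset" "lin_indep2 d e" "g \<noteq> 0" for d g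
    unfolding A_def B_def
    using image_multiple_in_plane[OF assms(1) that(1,2) assms(3,4) that(3) assms(6)] .
  obtain k where "e k = 0" using Mset_common_zero_coord[of "{e}" "{}"] assms(1) by auto
  then have d: "lin_indep2 (unit_vec k) e"
    using lin_indep2_by_coord[of e k "unit_vec k"] lin_indep2_commute assms(2) by auto
  \<comment> \<open>A second plane through A and B: the preimage of a point off the first plane
      does not lie on the line through 0 and e.\<close>
  obtain m where m: "unit_vec m \<notin> plane A B (\<sigma> (unit_vec k))" "unit_vec m \<noteq> \<sigma> 0"
    using ex_unit_vec_notin_plane[OF \<open>A \<in> Mset\<close> \<open>B \<in> Mset\<close>, of "\<sigma> (unit_vec k)" "\<sigma> 0"] by blast
  obtain d' where d': "d' \<in> Mset" "\<sigma> d' = unit_vec m" using \<sigma>_surj[of "unit_vec m"] by auto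
  have "d' \<noteq> 0" using m(2) d' by auto
  have "lin_indep2 d' e"
  proof (rule ccontr)
    assume "\<not> lin_indep2 d' e"
    then obtain g where "g \<noteq> 0" "d' = smul g e"
      using not_lin_indep2_multiple \<open>d' \<noteq> 0\<close> assms(2) by blast
    then show False using in_plane[OF _ d \<open>g \<noteq> 0\<close>] m(1) d'(2) by simp
  qed
  have "\<sigma> (smul \<gamma> e) \<in> line A B"
    by (rule plane_inter_in_line[OF in_plane[OF _ d assms(5)]
          in_plane[OF d'(1) \<open>lin_indep2 d' e\<close> assms(5)]])
      (use m(1) d'(2) in simp_all)
  then show ?thesis unfolding A_def B_def .
qed

lemma image_collinear:
  assumes "p \<in> Mset" "p' \<in> Mset" "p \<noteq> 0" "p' \<noteq> 0" "p \<noteq> p'" "n \<in> line p p'" "n \<noteq> 0"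
  shows "\<sigma> n \<in> line (\<sigma> p) (\<sigma> p')"
proof (cases "lin_indep2 p p'")
  case True
  show ?thesis using image_in_line[OF assms(1,2) True left_in_line right_in_line assms(6,5)] .
next
  case False
  obtain c where c: "c \<noteq> 0" "p' = smul c p"
    using not_lin_indep2_multiple[OF assms(4,3)] False lin_indep2_commute by blast
  then have "c \<noteq> 1" using assms(5) by auto
  obtain t where "n = p + smul t (p' - p)" using assms(6) by (auto simp: line_def)
  then have n: "n = smul (1 + t * (c - 1)) p" unfolding c(2) by (simp add: fun_eq_iff algebra_simps)
  have "1 + t * (c - 1) \<noteq> 0" using n assms(7) by auto
  have "\<sigma> (smul (1 + t * (c - 1)) p) \<in> line (\<sigma> (smul 1 p)) (\<sigma> (smul c p))"
    by (rule image_multiples_collinear) (use assms c \<open>c \<noteq> 1\<close> \<open>1 + t * (c - 1) \<noteq> 0\<close> in auto)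
  then show ?thesis using n c by simp
qed

abbreviation \<sigma>' :: "(nat \<Rightarrow> rat) \<Rightarrow> (nat \<Rightarrow> rat)" where
  "\<sigma>' \<equiv> inv_into Mset \<sigma>"

lemma \<sigma>'_Mset [simp, intro]: "y \<in> Mset \<Longrightarrow> \<sigma>' y \<in> Mset"
  using bij by (simp add: bij_betw_def inv_into_into)

lemma \<sigma>_\<sigma>' [simp]: "y \<in> Mset \<Longrightarrow> \<sigma> (\<sigma>' y) = y"
  using bij by (simp add: bij_betw_def f_inv_into_f)

lemma \<sigma>'_\<sigma> [simp]: "x \<in> Mset \<Longrightarrow> \<sigma>' (\<sigma> x) = x"
  using bij by (simp add: bij_betw_def inv_into_f_f)

lemma inverse_automorphism: "affine_rel_automorphism R \<sigma>'"
proof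
  show "affine_rel R" by (rule affine)
  show "bij_betw \<sigma>' Mset Mset" by (rule bij_betw_inv_into[OF bij])
  show "preserves3 \<sigma>' R"
    unfolding preserves3_def
  proof (intro ballI)
    fix a b c assume "a \<in> Mset" "b \<in> Mset" "c \<in> Mset"
    then show "R a b c = R (\<sigma>' a) (\<sigma>' b) (\<sigma>' c)" using R_iff[of "\<sigma>' a" "\<sigma>' b" "\<sigma>' c"] by simp
  qed
qed

lemma preimage_in_line:
  assumes "P1 \<in> Mset" "P2 \<in> Mset" "\<sigma> P1 \<noteq> 0" "\<sigma> P2 \<noteq> 0" "P1 \<noteq> P2"
    and "w \<in> Mset" "\<sigma> w \<in> line (\<sigma> P1) (\<sigma> P2)" "\<sigma> w \<noteq> 0"
  shows "w \<in> line P1 P2"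
proof -
  have "\<sigma> P1 \<noteq> \<sigma> P2" using assms \<sigma>_eq_iff by auto
  then have "\<sigma>' (\<sigma> w) \<in> line (\<sigma>' (\<sigma> P1)) (\<sigma>' (\<sigma> P2))"
    using affine_rel_automorphism.image_collinear[OF inverse_automorphism, of "\<sigma> P1" "\<sigma> P2" "\<sigma> w"]
      assms by auto
  then show ?thesis using assms by simp
qed

lemma image_lines_disjoint:
  assumes 12: "P1 \<in> Mset" "P2 \<in> Mset" "P1 \<noteq> P2" "0 \<notin> line (\<sigma> P1) (\<sigma> P2)"
    and 34: "P3 \<in> Mset" "P4 \<in> Mset" "P3 \<noteq> P4" "0 \<notin> line (\<sigma> P3) (\<sigma> P4)"
    and "line P1 P2 \<inter> line P3 P4 \<subseteq> {\<sigma>' 0}"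
  shows "line (\<sigma> P1) (\<sigma> P2) \<inter> line (\<sigma> P3) (\<sigma> P4) = {}"
proof -
  have preimage: "\<sigma>' z \<in> line P Q"
    if "P \<in> Mset" "Q \<in> Mset" "P \<noteq> Q" "0 \<notin> line (\<sigma> P) (\<sigma> Q)" "z \<in> line (\<sigma> P) (\<sigma> Q)" for P Q z
  proof (rule preimage_in_line[OF that(1,2)])
    show "\<sigma> P \<noteq> 0" "\<sigma> Q \<noteq> 0" "P \<noteq> Q" using that(3,4) left_in_line right_in_line by metis+
    have "z \<in> Mset" using line_Mset[OF \<sigma>_Mset \<sigma>_Mset that(5)] that(1,2) by blast
    then show "\<sigma>' z \<in> Mset" "\<sigma> (\<sigma>' z) \<in> line (\<sigma> P) (\<sigma> Q)" "\<sigma> (\<sigma>' z) \<noteq> 0"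
      using that(4,5) by auto
  qed
  have False if "z \<in> line (\<sigma> P1) (\<sigma> P2)" "z \<in> line (\<sigma> P3) (\<sigma> P4)" for z
  proof -
    have "\<sigma>' z = \<sigma>' 0" using preimage[OF 12 that(1)] preimage[OF 34 that(2)] assms(9) by blast
    then have "z = 0"
      using \<sigma>_\<sigma>'[of z] \<sigma>_\<sigma>'[of 0] line_Mset[OF \<sigma>_Mset \<sigma>_Mset that(1)] 12 by (metis Mset_zero)
    then show False using that(1) 12(4) by simp
  qed
  then show ?thesis by blast
qed

lemma preimage_line_through_zero:
  assumes "\<sigma> 0 = 0" and xy: "x \<in> Mset" "y \<in> Mset" "x \<noteq> y" "x \<noteq> 0" "y \<noteq> 0"
    and "0 \<in> line (\<sigma> x) (\<sigma> y)"
    and q: "q \<in> line x y" "q \<noteq> 0" and r: "r \<in> Mset" "r \<noteq> 0" "r \<noteq> q"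
    and zero_qr: "0 \<in> line (\<sigma> q) (\<sigma> r)"
  shows "r \<in> line x y"
proof -
  have \<sigma>_nonzero: "\<sigma> w \<noteq> 0" if "w \<in> Mset" "w \<noteq> 0" for w
    using \<sigma>_eq_iff[OF that(1) Mset_zero] assms(1) that(2) by auto
  have "q \<in> Mset" using line_Mset xy q by blast
  then have "\<sigma> q \<noteq> 0" "\<sigma> r \<noteq> 0" using \<sigma>_nonzero q r by auto
  have "\<sigma> q \<in> line (\<sigma> x) (\<sigma> y)" by (rule image_collinear[OF xy(1,2,4,5,3) q])
  then have "line 0 (\<sigma> q) = line (\<sigma> x) (\<sigma> y)"
    using line_eq[OF assms(7)] \<open>\<sigma> q \<noteq> 0\<close> by auto
  moreover have "line 0 (\<sigma> q) = line (\<sigma> q) (\<sigma> r)"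
    using line_eq[OF zero_qr left_in_line] \<open>\<sigma> q \<noteq> 0\<close> by auto
  ultimately have "\<sigma> r \<in> line (\<sigma> x) (\<sigma> y)" by (metis right_in_line)
  then show ?thesis
    using preimage_in_line[OF xy(1,2) \<sigma>_nonzero[OF xy(1,4)] \<sigma>_nonzero[OF xy(2,5)] xy(3) r(1)]
      \<open>\<sigma> r \<noteq> 0\<close> by blast
qed

lemma image_grid_coplanar:
  assumes xy: "x \<in> Mset" "y \<in> Mset" "lin_indep2 x y"
  defines "\<Pi> \<equiv> plane (\<sigma> x) (\<sigma> y) (\<sigma> (comb x y 2 0))"
  shows "\<sigma> (comb x y (-1) 1) \<in> \<Pi>" "\<sigma> (comb x y (-1) 2) \<in> \<Pi>" "\<sigma> (comb x y 0 2) \<in> \<Pi>"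
proof -
  let ?c = "comb x y"
  have on_line: "\<sigma> (?c a b) \<in> \<Pi>" if "a + b = 1" for a b
  proof -
    have "?c a b \<in> line (?c 1 0) (?c 0 1)"
      unfolding comb_in_line_iff[OF xy(3)] using that by (intro exI[of _ b]) simp
    then have "\<sigma> (?c a b) \<in> line (\<sigma> x) (\<sigma> y)"
      using image_in_line[OF xy left_in_line right_in_line _ lin_indep2_neq[OF xy(3)]]
      unfolding comb_unit by blast
    then show ?thesis unfolding \<Pi>_def using line_subset_plane by blast
  qed
  have through: "line a b \<subseteq> \<Pi>" if "a \<in> \<Pi>" "b \<in> \<Pi>" for a b
    using line_subset_plane_if_in that unfolding \<Pi>_def by blast
  have x2: "\<sigma> (?c 2 0) \<in> \<Pi>" unfolding \<Pi>_def by simp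
  have swap: "\<sigma> (?c a' b') \<in> line (\<sigma> (?c 2 0)) (\<sigma> (?c a b))"
    if "?c a b \<in> line (?c 2 0) (?c a' b')" "lin_indep2 (?c 2 0) (?c a' b')" "a \<noteq> 2 \<or> b \<noteq> 0"
    for a b a' b'
  proof (rule line_swap)
    show "\<sigma> (?c a b) \<in> line (\<sigma> (?c 2 0)) (\<sigma> (?c a' b'))"
      using image_in_line[OF comb_Mset comb_Mset that(2) left_in_line right_in_line that(1)]
        lin_indep2_neq[OF that(2)] xy by blast
    show "\<sigma> (?c a b) \<noteq> \<sigma> (?c 2 0)" using that(3) xy \<sigma>_eq_iff comb_eq_iff[OF xy(3)] by auto
  qed
  \<comment> \<open>Writing (a, b) for comb x y a b: (1/2, 1/2) lies on the line through (2, 0) and (-1, 1).\<close>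
  have "\<sigma> (?c (-1) 1) \<in> line (\<sigma> (?c 2 0)) (\<sigma> (?c (1/2) (1/2)))"
    by (rule swap) (auto simp: comb_in_line_iff[OF xy(3)] lin_indep2_comb[OF xy(3)]
        intro: exI[of _ "1/2"])
  moreover have "\<sigma> (?c (1/2) (1/2)) \<in> \<Pi>" by (rule on_line) simp
  ultimately show "\<sigma> (?c (-1) 1) \<in> \<Pi>" using through[OF x2] by blast
  show "\<sigma> (?c (-1) 2) \<in> \<Pi>" by (rule on_line) simp
  \<comment> \<open>(4, -3) lies on the line through (2, 0) and (0, 3), and (0, 2) on the line through (0, 1)
      and (0, 3).\<close>
  have "\<sigma> (?c 0 3) \<in> line (\<sigma> (?c 2 0)) (\<sigma> (?c 4 (-3)))"
    by (rule swap) (auto simp: comb_in_line_iff[OF xy(3)] lin_indep2_comb[OF xy(3)]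
        intro: exI[of _ "-1"])
  moreover have "\<sigma> (?c 4 (-3)) \<in> \<Pi>" by (rule on_line) simp
  ultimately have "\<sigma> (?c 0 3) \<in> \<Pi>" using through[OF x2] by blast
  moreover have "\<sigma> (?c 0 2) \<in> line (\<sigma> (?c 0 1)) (\<sigma> (?c 0 3))"
  proof -
    have e: "smul g y = ?c 0 g" for g by (simp add: comb_def fun_eq_iff)
    have "\<sigma> (smul 2 y) \<in> line (\<sigma> (smul 1 y)) (\<sigma> (smul 3 y))"
      by (rule image_multiples_collinear) (use xy(2) lin_indep2_nonzero(2)[OF xy(3)] in simp_all)
    then show ?thesis by (simp only: e)
  qed
  moreover have "\<sigma> (?c 0 1) \<in> \<Pi>" unfolding \<Pi>_def comb_unit by simp
  ultimately show "\<sigma> (?c 0 2) \<in> \<Pi>" using through by blast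
qed

lemma image_lin_indep2_fixing_zero:
  assumes xy: "x \<in> Mset" "y \<in> Mset" "lin_indep2 x y" and "\<sigma> 0 = 0"
  shows "lin_indep2 (\<sigma> x) (\<sigma> y)"
proof (rule ccontr)
  assume "\<not> lin_indep2 (\<sigma> x) (\<sigma> y)"
  let ?c = "comb x y" and ?L = "line x y"
  have \<sigma>_nonzero: "\<sigma> w \<noteq> 0" if "w \<in> Mset" "w \<noteq> 0" for w
    using \<sigma>_eq_iff[OF that(1) Mset_zero] \<open>\<sigma> 0 = 0\<close> that(2) by auto
  have "x \<noteq> y" "x \<noteq> 0" "y \<noteq> 0" using lin_indep2_neq lin_indep2_nonzero xy(3) by auto
  then have "\<sigma> x \<noteq> \<sigma> y" "\<sigma> x \<noteq> 0" "\<sigma> y \<noteq> 0" using \<sigma>_eq_iff \<sigma>_nonzero xy by auto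
  then have "0 \<in> line (\<sigma> x) (\<sigma> y)"
    using zero_in_line_if_not_lin_indep2 \<open>\<not> lin_indep2 (\<sigma> x) (\<sigma> y)\<close> by blast
  have "0 \<notin> ?L" by (rule zero_notin_line_if_lin_indep2[OF xy(3)])
  have off_L: "0 \<notin> line (\<sigma> q) (\<sigma> r)" if q: "q \<in> ?L" and r: "r \<in> Mset" "r \<notin> ?L" "r \<noteq> 0" for q r
  proof -
    have "q \<noteq> 0" "r \<noteq> q" using q r(2) \<open>0 \<notin> ?L\<close> by blast+
    then show ?thesis
      using preimage_line_through_zero[OF \<open>\<sigma> 0 = 0\<close> xy(1,2) \<open>x \<noteq> y\<close> \<open>x \<noteq> 0\<close> \<open>y \<noteq> 0\<close>
          \<open>0 \<in> line (\<sigma> x) (\<sigma> y)\<close> q _ r(1,3)] r(2) by blast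
  qed
  have "\<sigma>' 0 = 0" using \<sigma>'_\<sigma>[OF Mset_zero] \<open>\<sigma> 0 = 0\<close> by simp
  have M: "?c a b \<in> Mset" for a b using xy by blast
  have pts: "?c 1 0 \<in> ?L" "?c 0 1 \<in> ?L" "?c (-1) 2 \<in> ?L" "?c 2 0 \<notin> ?L" "?c 0 2 \<notin> ?L" "?c (-1) 1 \<notin> ?L"
    unfolding comb_in_line_iff_sum[OF xy(3)] by simp_all
  have nonzero: "?c 2 0 \<noteq> 0" "?c 0 2 \<noteq> 0" "?c (-1) 1 \<noteq> 0"
    using comb_eq_iff[OF xy(3)] unfolding comb_unit(3)[symmetric, of x y] by simp_all
  have disjoint: "line (\<sigma> q1) (\<sigma> r1) \<inter> line (\<sigma> q2) (\<sigma> r2) = {}"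
    if 1: "q1 \<in> ?L" "r1 \<in> Mset" "r1 \<notin> ?L" "r1 \<noteq> 0" and 2: "q2 \<in> ?L" "r2 \<in> Mset" "r2 \<notin> ?L" "r2 \<noteq> 0"
      and "line q1 r1 \<inter> line q2 r2 \<subseteq> {0}" for q1 r1 q2 r2
  proof (rule image_lines_disjoint[OF _ 1(2) _ off_L[OF 1] _ 2(2) _ off_L[OF 2]])
    show "q1 \<in> Mset" "q2 \<in> Mset" using line_Mset xy 1(1) 2(1) by blast+
    show "q1 \<noteq> r1" "q2 \<noteq> r2" using 1(1,3) 2(1,3) by blast+
    show "line q1 r1 \<inter> line q2 r2 \<subseteq> {\<sigma>' 0}" using that(9) \<open>\<sigma>' 0 = 0\<close> by simp
  qed
  \<comment> \<open>In the plane through the images of x, y and 2x, the disjoint image lines are parallel, which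
      forces the image of (-1, 2) onto the image line of y and (-1, 1).\<close>
  have on_line: "\<sigma> (?c (-1) 2) \<in> line (\<sigma> (?c 0 1)) (\<sigma> (?c (-1) 1))"
  proof (rule in_line_by_parallel_chain
      [where X = "\<sigma> (?c 1 0)" and X' = "\<sigma> (?c 2 0)" and Y' = "\<sigma> (?c 0 2)"])
    let ?\<Sigma> = "plane (\<sigma> (?c 1 0)) (\<sigma> (?c 0 1)) (\<sigma> (?c 2 0))"
    show "\<sigma> (?c 1 0) \<in> ?\<Sigma>" "\<sigma> (?c 2 0) \<in> ?\<Sigma>" "\<sigma> (?c 0 1) \<in> ?\<Sigma>" "\<sigma> (?c 0 2) \<in> ?\<Sigma>"
      "\<sigma> (?c (-1) 1) \<in> ?\<Sigma>" "\<sigma> (?c (-1) 2) \<in> ?\<Sigma>"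
      using image_grid_coplanar[OF xy] unfolding comb_unit by simp_all
    show "\<sigma> (?c 1 0) \<noteq> \<sigma> (?c 2 0)" "\<sigma> (?c 0 1) \<noteq> \<sigma> (?c 0 2)" "\<sigma> (?c 0 1) \<noteq> \<sigma> (?c (-1) 1)"
      using \<sigma>_eq_iff[OF M M] comb_eq_iff[OF xy(3)] by auto
    show "line (\<sigma> (?c 1 0)) (\<sigma> (?c 2 0)) \<inter> line (\<sigma> (?c 0 1)) (\<sigma> (?c (-1) 1)) = {}"
      by (rule disjoint[OF pts(1) M pts(4) nonzero(1) pts(2) M pts(6) nonzero(3)
            comb_lines_inter_subset_zero[OF xy(3)]]) simp
    show "line (\<sigma> (?c 1 0)) (\<sigma> (?c 2 0)) \<inter> line (\<sigma> (?c 0 1)) (\<sigma> (?c 0 2)) = {}"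
      by (rule disjoint[OF pts(1) M pts(4) nonzero(1) pts(2) M pts(5) nonzero(2)
            comb_lines_inter_subset_zero[OF xy(3)]]) simp
    show "line (\<sigma> (?c 0 1)) (\<sigma> (?c 0 2)) \<inter> line (\<sigma> (?c (-1) 2)) (\<sigma> (?c (-1) 1)) = {}"
      by (rule disjoint[OF pts(2) M pts(5) nonzero(2) pts(3) M pts(6) nonzero(3)
            comb_lines_inter_subset_zero[OF xy(3)]]) simp
  qed
  moreover have "0 \<notin> line (\<sigma> (?c 0 1)) (\<sigma> (?c (-1) 1))" by (rule off_L[OF pts(2) M pts(6) nonzero(3)])
  ultimately have "\<sigma> (?c 0 1) \<noteq> 0" "\<sigma> (?c (-1) 1) \<noteq> 0" "\<sigma> (?c (-1) 2) \<noteq> 0"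
    using left_in_line right_in_line by metis+
  moreover have "?c 0 1 \<noteq> ?c (-1) 1" using comb_eq_iff[OF xy(3)] by simp
  ultimately have "?c (-1) 2 \<in> line (?c 0 1) (?c (-1) 1)"
    using preimage_in_line[OF M M _ _ _ M on_line] by blast
  then show False unfolding comb_in_line_iff[OF xy(3)] by simp
qed

lemma image_lin_indep2_moving_zero:
  assumes xy: "x \<in> Mset" "y \<in> Mset" "lin_indep2 x y" and off: "\<sigma>' 0 \<noteq> 0" "\<sigma>' 0 \<notin> line x y"
  shows "lin_indep2 (\<sigma> x) (\<sigma> y)"
proof (rule ccontr)
  assume "\<not> lin_indep2 (\<sigma> x) (\<sigma> y)"
  define p where "p = \<sigma>' 0"
  have "p \<in> Mset" "\<sigma> p = 0" unfolding p_def by simp_all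
  have "x \<noteq> p" "y \<noteq> p" "x \<noteq> 0" "x \<noteq> y" using off(2) lin_indep2_nonzero[OF xy(3)] lin_indep2_neq[OF xy(3)]
    unfolding p_def by auto
  have \<sigma>_nonzero: "\<sigma> w \<noteq> 0" if "w \<in> Mset" "w \<noteq> p" for w
    using \<sigma>_eq_iff[OF that(1) \<open>p \<in> Mset\<close>] \<open>\<sigma> p = 0\<close> that(2) by auto
  have \<sigma>xy: "\<sigma> x \<noteq> 0" "\<sigma> y \<noteq> 0" using \<sigma>_nonzero xy \<open>x \<noteq> p\<close> \<open>y \<noteq> p\<close> by auto
  moreover have "\<sigma> x \<noteq> \<sigma> y" using \<sigma>_eq_iff xy \<open>x \<noteq> y\<close> by simp
  ultimately have "0 \<in> line (\<sigma> x) (\<sigma> y)"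
    using zero_in_line_if_not_lin_indep2 \<open>\<not> lin_indep2 (\<sigma> x) (\<sigma> y)\<close> by blast
  then have image_line: "line 0 (\<sigma> x) = line (\<sigma> x) (\<sigma> y)"
    using line_eq[OF _ left_in_line] \<sigma>xy(1)[symmetric] by blast
  \<comment> \<open>A point n \<notin> {0, p, x} on the line through p and x is mapped onto the line through 0 and
      the image of x, which is the image line of x and y; so n lies on the line through x and y.\<close>
  have "p + smul 2 (x - p) \<noteq> 0 \<or> p + smul 3 (x - p) \<noteq> 0"
  proof (rule ccontr)
    assume both: "\<not> ?thesis"
    have "x - p = (p + smul 3 (x - p)) - (p + smul 2 (x - p))" by (simp add: fun_eq_iff algebra_simps)
    also have "\<dots> = 0" using both by simp
    finally show False using \<open>x \<noteq> p\<close> by simp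
  qed
  then obtain k :: rat where "k = 2 \<or> k = 3" "p + smul k (x - p) \<noteq> 0" by blast
  then have k: "k \<noteq> 0" "k \<noteq> 1" "p + smul k (x - p) \<noteq> 0" by auto
  define n where "n = p + smul k (x - p)"
  have "n \<in> line p x" unfolding n_def line_def by blast
  have "n \<in> Mset" unfolding n_def using xy(1) \<open>p \<in> Mset\<close> by blast
  have "n - p = smul k (x - p)" "n - x = smul (k - 1) (x - p)"
    unfolding n_def by (simp_all add: fun_eq_iff algebra_simps)
  then have "n \<noteq> p" "n \<noteq> x" using k \<open>x \<noteq> p\<close> by auto
  have "\<sigma> n \<in> line (\<sigma> x) (\<sigma> y)"
    using image_collinear[OF \<open>p \<in> Mset\<close> xy(1) off(1)[folded p_def] \<open>x \<noteq> 0\<close> \<open>x \<noteq> p\<close>[symmetric]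
        \<open>n \<in> line p x\<close>] k(3) image_line \<open>\<sigma> p = 0\<close> unfolding n_def by simp
  then have "n \<in> line x y"
    using preimage_in_line[OF xy(1,2) \<sigma>xy \<open>x \<noteq> y\<close> \<open>n \<in> Mset\<close>] \<sigma>_nonzero \<open>n \<in> Mset\<close> \<open>n \<noteq> p\<close> by blast
  then have "line n x = line x y" by (rule line_eq[OF _ left_in_line \<open>n \<noteq> x\<close>])
  moreover have "line n x = line p x" by (rule line_eq[OF \<open>n \<in> line p x\<close> right_in_line \<open>n \<noteq> x\<close>])
  ultimately have "p \<in> line x y" using left_in_line[of p x] by simp
  then show False using off(2) unfolding p_def by simp
qed

lemma image_lin_indep2:
  assumes "x \<in> Mset" "y \<in> Mset" "lin_indep2 x y" "\<sigma>' 0 \<notin> line x y"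
  shows "lin_indep2 (\<sigma> x) (\<sigma> y)"
proof (cases "\<sigma>' 0 = 0")
  case True
  then have "\<sigma> 0 = 0" using \<sigma>_\<sigma>'[OF Mset_zero] by simp
  then show ?thesis using image_lin_indep2_fixing_zero[OF assms(1-3)] by blast
next
  case False
  then show ?thesis using image_lin_indep2_moving_zero[OF assms(1-3) _ assms(4)] by blast
qed

section \<open>Additivity\<close>

lemma image_parallelogram:
  assumes M: "X \<in> Mset" "Y \<in> Mset" "Z \<in> Mset" and W: "W = X - Y + Z"
    and indep: "lin_indep2 X Y" "lin_indep2 Y Z" "lin_indep2 Z W" "lin_indep2 W X"
      "lin_indep2 X Z" "lin_indep2 Y W"
    and avoid: "\<sigma>' 0 \<notin> line X Y" "\<sigma>' 0 \<notin> line Y Z" "\<sigma>' 0 \<notin> line Z W" "\<sigma>' 0 \<notin> line W X"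
    and noncollinear: "Z \<notin> line X Y" "X \<notin> line Y Z"
  shows "\<sigma> W = \<sigma> X - \<sigma> Y + \<sigma> Z"
proof -
  have "W \<in> Mset" using M W by blast
  have sides: "line X Y \<inter> line Z W \<subseteq> {\<sigma>' 0}" "line Y Z \<inter> line W X \<subseteq> {\<sigma>' 0}"
    using parallelogram_sides_disjoint[OF W] noncollinear by blast+
  have avoid_zero: "0 \<notin> line (\<sigma> P) (\<sigma> Q)"
    if "P \<in> Mset" "Q \<in> Mset" "lin_indep2 P Q" "\<sigma>' 0 \<notin> line P Q" for P Q
    using zero_notin_line_if_lin_indep2[OF image_lin_indep2[OF that]] .
  define m where "m = X + smul (1/2) (Z - X)"
  have "m \<in> line X Z" unfolding m_def line_def by blast
  moreover have "m = Y + smul (1/2) (W - Y)" unfolding m_def W by (simp add: fun_eq_iff field_simps)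
  then have "m \<in> line Y W" unfolding line_def by blast
  ultimately show ?thesis
    using parallelogram_vertex[OF
        image_lines_disjoint[OF M(1,2) lin_indep2_neq[OF indep(1)] avoid_zero[OF M(1,2) indep(1) avoid(1)]
          M(3) \<open>W \<in> Mset\<close> lin_indep2_neq[OF indep(3)] avoid_zero[OF M(3) \<open>W \<in> Mset\<close> indep(3) avoid(3)]
          sides(1)]
        image_lines_disjoint[OF M(2,3) lin_indep2_neq[OF indep(2)] avoid_zero[OF M(2,3) indep(2) avoid(2)]
          \<open>W \<in> Mset\<close> M(1) lin_indep2_neq[OF indep(4)] avoid_zero[OF \<open>W \<in> Mset\<close> M(1) indep(4) avoid(4)]
          sides(2)]
        image_in_line[OF M(1,3) indep(5) left_in_line right_in_line _ lin_indep2_neq[OF indep(5)]]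
        image_in_line[OF M(2) \<open>W \<in> Mset\<close> indep(6) left_in_line right_in_line _ lin_indep2_neq[OF indep(6)]]]
    by blast
qed

lemma image_unit_square:
  assumes M: "X \<in> Mset" "Y \<in> Mset" "Z \<in> Mset" and W: "W = X - Y + Z"
    and X: "X k = 0" "X j = 0" and Y: "Y k = 1" "Y j = 0" and Z: "Z k = 1" "Z j = 1"
    and pre0: "\<sigma>' 0 k = 0" "\<sigma>' 0 j = 0" and "X \<noteq> 0" "X \<noteq> \<sigma>' 0"
  shows "\<sigma> W = \<sigma> X - \<sigma> Y + \<sigma> Z"
proof (rule image_parallelogram[OF M W])
  have Wc: "W k = 0" "W j = 1" using W X Y Z by simp_all
  then have ne: "Y \<noteq> 0" "W \<noteq> 0" "\<sigma>' 0 \<noteq> Y" "\<sigma>' 0 \<noteq> W" using Y pre0 by auto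
  show "lin_indep2 X Y" "lin_indep2 X Z" using lin_indep2_by_coord X Y Z \<open>X \<noteq> 0\<close> by auto
  show "lin_indep2 Y Z" "lin_indep2 Y W" using lin_indep2_by_coord Y Z Wc ne by auto
  show "lin_indep2 Z W" "lin_indep2 W X"
    using lin_indep2_commute lin_indep2_by_coord[of W k Z] lin_indep2_by_coord[of X j W] Z Wc X ne
      \<open>X \<noteq> 0\<close> by auto
  show "\<sigma>' 0 \<notin> line X Y" "\<sigma>' 0 \<notin> line Y Z"
    using notin_line_same_coord[of "\<sigma>' 0" k X Y] notin_line_same_coord[of "\<sigma>' 0" j Y Z]
      X Y Z pre0 ne \<open>X \<noteq> \<sigma>' 0\<close> by auto
  show "\<sigma>' 0 \<notin> line Z W" "\<sigma>' 0 \<notin> line W X"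
    using notin_line_same_coord[of "\<sigma>' 0" k W Z] notin_line_same_coord[of "\<sigma>' 0" j X W]
      X Wc Z pre0 ne \<open>X \<noteq> \<sigma>' 0\<close> line_commute by auto
  show "Z \<notin> line X Y" "X \<notin> line Y Z"
    using notin_line_const_coord[of Z j X Y] notin_line_const_coord[of X k Y Z] X Y Z by auto
qed

lemma image_add_diff_generic:
  assumes M: "x \<in> Mset" "y \<in> Mset" "z \<in> Mset"
    and generic: "x \<notin> {0, \<sigma>' 0}" "y \<notin> {0, \<sigma>' 0}" "z \<notin> {0, \<sigma>' 0}" "x - y + z \<notin> {0, \<sigma>' 0}"
  shows "\<sigma> (x - y + z) = \<sigma> x - \<sigma> y + \<sigma> z"
proof -
  define w where "w = x - y + z"
  have "finite {x, y, z, \<sigma>' 0}" "{x, y, z, \<sigma>' 0} \<subseteq> Mset" using M by auto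
  then obtain k where k: "\<forall>v\<in>{x, y, z, \<sigma>' 0}. v k = 0"
    using Mset_common_zero_coord[of _ "{}"] by blast
  obtain j where j: "j \<noteq> k" "\<forall>v\<in>{x, y, z, \<sigma>' 0}. v j = 0"
    using Mset_common_zero_coord[of _ "{k}"] \<open>finite {x, y, z, \<sigma>' 0}\<close> \<open>{x, y, z, \<sigma>' 0} \<subseteq> Mset\<close> by blast
  define f g where "f = unit_vec k" and "g = unit_vec j"
  \<comment> \<open>Four unit squares in the fresh coordinates k, j, each with its (0, 0)-corner in {x, y, z, w};
      comparing them eliminates the auxiliary vertices.\<close>
  have square: "\<sigma> (X - Y + (z + f + g)) = \<sigma> X - \<sigma> Y + \<sigma> (z + f + g)"
    if "X \<in> {x, y, z, w}" "Y \<in> {y + f, z + f}" for X Y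
  proof (rule image_unit_square[OF _ _ _ refl])
    show "X \<in> Mset" "Y \<in> Mset" "z + f + g \<in> Mset" using that M unfolding w_def f_def g_def by auto
    show "X k = 0" "X j = 0" "\<sigma>' 0 k = 0" "\<sigma>' 0 j = 0" "X \<noteq> 0" "X \<noteq> \<sigma>' 0"
      using that k j generic unfolding w_def by auto
    show "Y k = 1" "Y j = 0" "(z + f + g) k = 1" "(z + f + g) j = 1"
      using that k j unfolding f_def g_def by auto
  qed
  have G: "\<sigma> (w + g) = \<sigma> x - \<sigma> (y + f) + \<sigma> (z + f + g)" "\<sigma> (w + g) = \<sigma> w - \<sigma> (z + f) + \<sigma> (z + f + g)"
    "\<sigma> (z + g) = \<sigma> y - \<sigma> (y + f) + \<sigma> (z + f + g)" "\<sigma> (z + g) = \<sigma> z - \<sigma> (z + f) + \<sigma> (z + f + g)"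
    using square[of x "y + f"] square[of w "z + f"] square[of y "y + f"] square[of z "z + f"]
    unfolding w_def by (simp_all add: algebra_simps)
  have "\<sigma> w i = \<sigma> x i - \<sigma> y i + \<sigma> z i" for i
    using fun_cong[OF G(1), of i] fun_cong[OF G(2), of i] fun_cong[OF G(3), of i] fun_cong[OF G(4), of i]
    by (simp only: plus_fun_apply minus_apply)
  then show ?thesis unfolding w_def by (simp add: fun_eq_iff)
qed

section \<open>The affine decomposition of \<sigma>\<close>

definition fresh_coord :: "(nat \<Rightarrow> rat) \<Rightarrow> nat" where
  "fresh_coord v = (SOME k. v k = 0 \<and> \<sigma>' 0 k = 0)"

lemma fresh_coord: "v \<in> Mset \<Longrightarrow> v (fresh_coord v) = 0 \<and> \<sigma>' 0 (fresh_coord v) = 0"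
  unfolding fresh_coord_def
  by (rule someI_ex) (use Mset_common_zero_coord[of "{v, \<sigma>' 0}" "{}"] in auto)

text \<open>The linear part of \<sigma> is read off at a unit vector whose coordinate vanishes on v and on
  \<sigma>' 0, so that both points used are neither 0 nor \<sigma>' 0.\<close>

definition lin_part :: "(nat \<Rightarrow> rat) \<Rightarrow> (nat \<Rightarrow> rat)" where
  "lin_part v = \<sigma> (unit_vec (fresh_coord v) + v) - \<sigma> (unit_vec (fresh_coord v))"

lemma lin_part_Mset: "v \<in> Mset \<Longrightarrow> lin_part v \<in> Mset"
  unfolding lin_part_def by blast

lemma image_diff_generic:
  assumes "x \<in> Mset" "y \<in> Mset" "x \<notin> {0, \<sigma>' 0}" "y \<notin> {0, \<sigma>' 0}"
  shows "\<sigma> x - \<sigma> y = lin_part (x - y)"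
proof -
  define e where "e = unit_vec (fresh_coord (x - y))"
  have fresh: "(x - y) (fresh_coord (x - y)) = 0" "\<sigma>' 0 (fresh_coord (x - y)) = 0"
    using fresh_coord[of "x - y"] assms by auto
  then have "e \<notin> {0, \<sigma>' 0}" "x - y + e \<notin> {0, \<sigma>' 0}"
    unfolding e_def by (auto dest: fun_cong[of _ _ "fresh_coord (x - y)"])
  then have "\<sigma> (x - y + e) = \<sigma> x - \<sigma> y + \<sigma> e"
    using image_add_diff_generic assms unfolding e_def by blast
  then show ?thesis unfolding lin_part_def e_def by (simp add: algebra_simps)
qed

lemma lin_part_add:
  assumes "a \<in> Mset" "b \<in> Mset"
  shows "lin_part (a + b) = lin_part a + lin_part b"
proof -
  obtain k where k: "\<forall>v\<in>{a, b, \<sigma>' 0}. v k = 0"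
    using Mset_common_zero_coord[of "{a, b, \<sigma>' 0}" "{}"] assms by auto
  define e where "e = unit_vec k"
  have eM: "e \<in> Mset" "e + b \<in> Mset" "e + (a + b) \<in> Mset" unfolding e_def using assms by blast+
  have generic: "e \<notin> {0, \<sigma>' 0}" "e + b \<notin> {0, \<sigma>' 0}" "e + (a + b) \<notin> {0, \<sigma>' 0}"
    using k unfolding e_def by (auto dest: fun_cong[of _ _ k])
  have "lin_part (a + b) = \<sigma> (e + (a + b)) - \<sigma> e"
    using image_diff_generic[OF eM(3,1) generic(3,1)] by simp
  also have "\<dots> = (\<sigma> (e + (a + b)) - \<sigma> (e + b)) + (\<sigma> (e + b) - \<sigma> e)" by simp
  also have "\<dots> = lin_part a + lin_part b"
    using image_diff_generic[OF eM(3,2) generic(3,2)] image_diff_generic[OF eM(2,1) generic(2,1)]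
    by (simp add: algebra_simps)
  finally show ?thesis .
qed

lemma lin_part_smul: "v \<in> Mset \<Longrightarrow> lin_part (smul p v) = smul p (lin_part v)"
  by (rule additive_on_Mset_homogeneous[OF lin_part_add])

lemma lin_part_diff:
  assumes "a \<in> Mset" "b \<in> Mset"
  shows "lin_part (a - b) = lin_part a - lin_part b"
proof -
  have "lin_part a = lin_part (a - b) + lin_part b" using lin_part_add[of "a - b" b] assms by auto
  then show ?thesis by simp
qed

lemma lin_part_eq_zero:
  assumes "v \<in> Mset" "lin_part v = 0"
  shows "v = 0"
proof -
  define e where "e = unit_vec (fresh_coord v)"
  have "\<sigma> (e + v) = \<sigma> e" using assms(2) unfolding lin_part_def e_def by simp
  then have "e + v = e" using \<sigma>_eq_iff[of "e + v" e] assms(1) unfolding e_def by blast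
  then show ?thesis by simp
qed

lemma lin_part_bij: "bij_betw lin_part Mset Mset"
proof (rule bij_betwI')
  show "lin_part a = lin_part b \<longleftrightarrow> a = b" if "a \<in> Mset" "b \<in> Mset" for a b
    using lin_part_eq_zero[of "a - b"] lin_part_diff that by auto
  show "lin_part v \<in> Mset" if "v \<in> Mset" for v using lin_part_Mset that .
  show "\<exists>v\<in>Mset. t = lin_part v" if t: "t \<in> Mset" for t
  proof -
    obtain m where m: "t m = 0" "\<sigma> 0 m = 0"
      using Mset_common_zero_coord[of "{t, \<sigma> 0}" "{}"] t by auto
    define a b where "a = \<sigma>' (t + unit_vec m)" and "b = \<sigma>' (unit_vec m)"
    have "a \<in> Mset" "b \<in> Mset" "\<sigma> a = t + unit_vec m" "\<sigma> b = unit_vec m"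
      unfolding a_def b_def using Mset_add[OF t unit_vec_Mset] by auto
    moreover have "\<sigma> (\<sigma>' 0) = 0" by simp
    ultimately have "a \<notin> {0, \<sigma>' 0}" "b \<notin> {0, \<sigma>' 0}"
      using m by (auto dest: fun_cong[of _ _ m])
    then have "lin_part (a - b) = t"
      using image_diff_generic[of a b] \<open>a \<in> Mset\<close> \<open>b \<in> Mset\<close> \<open>\<sigma> a = _\<close> \<open>\<sigma> b = _\<close> by simp
    then show ?thesis using \<open>a \<in> Mset\<close> \<open>b \<in> Mset\<close> by blast
  qed
qed

definition offset :: "nat \<Rightarrow> rat" where
  "offset = \<sigma> (unit_vec (fresh_coord 0)) - lin_part (unit_vec (fresh_coord 0))"

lemma offset_Mset: "offset \<in> Mset"
  unfolding offset_def using lin_part_Mset by blast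

lemma lin_part_zero: "lin_part 0 = 0"
  using lin_part_add[of 0 0] by simp

lemma affine_generic: "x \<in> Mset \<Longrightarrow> x \<notin> {0, \<sigma>' 0} \<Longrightarrow> \<sigma> x = lin_part x + offset"
proof -
  assume x: "x \<in> Mset" "x \<notin> {0, \<sigma>' 0}"
  define c where "c = unit_vec (fresh_coord 0)"
  have "c \<notin> {0, \<sigma>' 0}"
    using fresh_coord[of 0] unfolding c_def by (auto dest: fun_cong[of _ _ "fresh_coord 0"])
  then have "\<sigma> x - \<sigma> c = lin_part x - lin_part c"
    using image_diff_generic[OF x(1) _ x(2)] lin_part_diff[OF x(1)] unfolding c_def by simp
  then show ?thesis unfolding offset_def c_def[symmetric] by (simp add: algebra_simps)
qed

lemma affine_at_preimage_zero:
  assumes "\<sigma>' 0 \<noteq> 0"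
  shows "\<sigma> (\<sigma>' 0) = lin_part (\<sigma>' 0) + offset"
proof -
  define p m where "p = \<sigma>' 0" and "m = fresh_coord (\<sigma>' 0)"
  have "p \<in> Mset" "p m = 0" using fresh_coord[of p] unfolding p_def m_def by auto
  define q where "q t = p + smul t (unit_vec m)" for t
  have q_Mset: "q t \<in> Mset" for t unfolding q_def using \<open>p \<in> Mset\<close> by blast
  have q_m: "q t m = t" for t unfolding q_def using \<open>p m = 0\<close> by simp
  have q_generic: "q t \<notin> {0, p}" if "t \<noteq> 0" for t
    using q_m[of t] \<open>p m = 0\<close> that by auto
  have q_affine: "\<sigma> (q t) = lin_part (q t) + offset" if "t \<noteq> 0" for t
    using affine_generic[OF q_Mset q_generic[OF that, unfolded p_def]] .
  \<comment> \<open>On the line q, \<sigma> is already known to agree with lin_part + offset except at p = q 0;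
      collinearity pins down \<sigma> p as well.\<close>
  have "lin_indep2 p (q 1)" using lin_indep2_by_coord[of p m "q 1"] \<open>p m = 0\<close> q_m assms p_def by auto
  moreover have "q 2 \<in> line p (q 1)" unfolding line_def q_def by (auto simp: fun_eq_iff intro!: exI[of _ 2])
  moreover have "q 1 \<noteq> q 2" using q_m[of 1] q_m[of 2] by force
  ultimately have "\<sigma> p \<in> line (\<sigma> (q 1)) (\<sigma> (q 2))"
    using image_in_line[OF \<open>p \<in> Mset\<close> q_Mset _ right_in_line _ left_in_line] by blast
  then obtain t where "\<sigma> p = \<sigma> (q 1) + smul t (\<sigma> (q 2) - \<sigma> (q 1))" unfolding line_def by blast
  also have "\<dots> = lin_part (q 1 + smul t (q 2 - q 1)) + offset"
    using q_affine[of 1] q_affine[of 2] q_Mset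
    by (simp add: lin_part_add lin_part_smul lin_part_diff Mset_diff Mset_smul fun_eq_iff algebra_simps)
  also have "q 1 + smul t (q 2 - q 1) = q (1 + t)" unfolding q_def by (simp add: fun_eq_iff algebra_simps)
  finally have "\<sigma> p = lin_part (q (1 + t)) + offset" .
  moreover have "q (1 + t) = p"
  proof (rule ccontr)
    assume "q (1 + t) \<noteq> p"
    then have "1 + t \<noteq> 0" unfolding q_def by auto
    then have "\<sigma> (q (1 + t)) = \<sigma> p" using q_affine \<open>\<sigma> p = lin_part (q (1 + t)) + offset\<close> by simp
    then show False using \<sigma>_eq_iff[OF q_Mset \<open>p \<in> Mset\<close>] \<open>q (1 + t) \<noteq> p\<close> by simp
  qed
  ultimately show ?thesis unfolding p_def by simp
qed

lemma affine_at_zero: "\<sigma> 0 = lin_part 0 + offset"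
proof (rule ccontr)
  assume "\<sigma> 0 \<noteq> lin_part 0 + offset"
  define y where "y = \<sigma>' offset"
  have "y \<in> Mset" "\<sigma> y = offset" unfolding y_def using offset_Mset by simp_all
  then have "y \<noteq> 0" using \<open>\<sigma> 0 \<noteq> lin_part 0 + offset\<close> lin_part_zero by auto
  then have "\<sigma> y = lin_part y + offset"
    using affine_generic[OF \<open>y \<in> Mset\<close>] affine_at_preimage_zero by (cases "y = \<sigma>' 0") auto
  then have "lin_part y = 0" using \<open>\<sigma> y = offset\<close> by simp
  then show False using lin_part_eq_zero \<open>y \<in> Mset\<close> \<open>y \<noteq> 0\<close> by blast
qed

lemma in_AGL: "in_AGL \<sigma>"
  unfolding in_AGL_def
proof (intro exI conjI ballI)
  show "linear_on_M lin_part" unfolding linear_on_M_def using lin_part_add lin_part_smul by simp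
  show "bij_betw lin_part Mset Mset" by (rule lin_part_bij)
  show "offset \<in> Mset" by (rule offset_Mset)
  show "\<sigma> x = vadd (lin_part x) offset" if "x \<in> Mset" for x
    using affine_generic[OF that] affine_at_preimage_zero affine_at_zero
    by (cases "x = 0"; cases "x = \<sigma>' 0") auto
qed

end

theorem lemma1:
  fixes R :: "(nat \<Rightarrow> rat) \<Rightarrow> (nat \<Rightarrow> rat) \<Rightarrow> (nat \<Rightarrow> rat) \<Rightarrow> bool"
    and \<sigma> :: "(nat \<Rightarrow> rat) \<Rightarrow> (nat \<Rightarrow> rat)"
  assumes "affine_rel R"
    and "bij_betw \<sigma> Mset Mset"
    and "preserves3 \<sigma> R"
  shows "in_AGL \<sigma>"
proof -
  interpret affine_rel_automorphism R \<sigma> using assms by unfold_locales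
  show ?thesis by (rule in_AGL)
qed

end
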